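(* Let $q$ be odd, and let $n, k$ be positive integers with $1 \leq k < n$. The number of GI-reducible $[n,k]_q$ codes is \[ L(n,k,q) + \frac{K(n,q)}{q-1} \cdot L^{\chi(-1)}(n-2,\, k-1,\, q), \] where $L(n,k,q)$ is the number of LCD $[n,k]_q$ codes, $K(n,q)$ is the number of vectors $x \in \mathbb{F}_q^n$ with $(x,x)=0$ and $(x,\mathbf{1}) \neq 0$, and $L^\epsilon(n,k,q)$ is the number of $k$-dimensional subspaces of $\mathbb{F}_q^n$ that are LCD with respect to a nondegenerate symmetric bilinear form of type $\epsilon$. The exponent $\chi(-1)$ equals $+1$ when $q \equiv 1 \pmod 4$ and $-1$ when $q \equiv 3 \pmod 4$.
   Context: $(x,y)=\sum_i x_i y_i$ is the standard inner product on $\mathbb{F}_q^n$, $\mathbf{1}$ the all-ones vector, $C^\perp$ the dual of a code $C$ under this inner product, $\mathrm{Hull}(C) = C\cap C^\perp$, and $C$ is LCD if $\mathrm{Hull}(C)=\{0\}$. $\chi$ is the quadratic character of $\mathbb{F}_q$. Over $\mathbb{F}_q$ ($q$ odd), every nondegenerate symmetric bilinear form on $\mathbb{F}_q^n$ is isometric to $\mathrm{diag}(1,\dots,1)$ (type $\epsilon=+1$) or $\mathrm{diag}(1,\dots,1,\gamma)$ with $\gamma$ a non-square (type $\epsilon=-1$); a subspace is LCD with respect to a form with matrix $M$ if $GMG^T$ is nonsingular for a generator matrix $G$. For a nondegenerate symmetric matrix $M$ and an $M$-LCD code $C$ (with generator matrix $G$), $\Pi_{C,M} = MG^T(GMG^T)^{-1}G$.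 With $J$ the all-ones matrix, a code $C$ is GI-reducible if there exists a nondegenerate symmetric $M = aI + bJ$ ($a\neq 0$, $a+nb\neq 0$) such that every code in the permutation class of $C$ is $M$-LCD and, for all $C_1,C_2$ in that class, $C_2 = C_1P$ for some permutation matrix $P$ iff $\Pi_{C_2,M} = P'^T\Pi_{C_1,M}P'$ for some permutation matrix $P'$. (Equivalently, $C$ is GI-reducible iff $C$ is LCD, or $\dim\mathrm{Hull}(C)=1$ with hull vector $x$ satisfying $(x,\mathbf{1})\neq 0$.) *)

theory Defs
  imports "Jordan_Normal_Form.Determinant" "HOL-Combinatorics.Permutations"
begin

text \<open>Vectors of F_q^n are elements of carrier_vec n (type 'a vec); a code is a set of
  such vectors. Codewords are row vectors; the row-vector/matrix product c P is written
  (transpose_mat P) *v c.\<close>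

definition all_ones_vec :: "nat \<Rightarrow> 'a::{zero,one} vec" where
  "all_ones_vec n = vec n (\<lambda>_. 1)"

definition all_ones_mat :: "nat \<Rightarrow> 'a::{zero,one} mat" where
  "all_ones_mat n = mat n n (\<lambda>_. 1)"

text \<open>G is a generator matrix of the length-n code C: its rows are linearly independent
  (the map v |-> v G on F^k is injective, k = number of rows) and C is its row space.\<close>
definition gen_mat :: "nat \<Rightarrow> 'a::field mat \<Rightarrow> 'a vec set \<Rightarrow> bool" where
  "gen_mat n G C \<longleftrightarrow> G \<in> carrier_mat (dim_row G) n
     \<and> inj_on (\<lambda>v. transpose_mat G *\<^sub>v v) (carrier_vec (dim_row G))
     \<and> C = (\<lambda>v. transpose_mat G *\<^sub>v v) ` carrier_vec (dim_row G)"

definition is_code :: "nat \<Rightarrow> nat \<Rightarrow> 'a::field vec set \<Rightarrow> bool" where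
  "is_code n k C \<longleftrightarrow> (\<exists>G. gen_mat n G C \<and> dim_row G = k)"

definition dual_code :: "nat \<Rightarrow> 'a::field vec set \<Rightarrow> 'a vec set" where
  "dual_code n C = {x \<in> carrier_vec n. \<forall>c\<in>C. x \<bullet> c = 0}"

definition code_hull :: "nat \<Rightarrow> 'a::field vec set \<Rightarrow> 'a vec set" where
  "code_hull n C = C \<inter> dual_code n C"

definition LCD :: "nat \<Rightarrow> 'a::field vec set \<Rightarrow> bool" where
  "LCD n C \<longleftrightarrow> code_hull n C = {0\<^sub>v n}"

definition M_LCD :: "nat \<Rightarrow> 'a::field mat \<Rightarrow> 'a vec set \<Rightarrow> bool" where
  "M_LCD n M C \<longleftrightarrow> (\<exists>G. gen_mat n G C \<and> det (G * M * transpose_mat G) \<noteq> 0)"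

definition mat_inv :: "'a::field mat \<Rightarrow> 'a mat" where
  "mat_inv A = (SOME B. B \<in> carrier_mat (dim_row A) (dim_row A)
                   \<and> A * B = 1\<^sub>m (dim_row A) \<and> B * A = 1\<^sub>m (dim_row A))"

definition proj_mat :: "nat \<Rightarrow> 'a::field mat \<Rightarrow> 'a vec set \<Rightarrow> 'a mat" where
  "proj_mat n M C = (let G = (SOME G. gen_mat n G C) in
      M * transpose_mat G * mat_inv (G * M * transpose_mat G) * G)"

definition perm_mat :: "nat \<Rightarrow> (nat \<Rightarrow> nat) \<Rightarrow> 'a::{zero,one} mat" where
  "perm_mat n \<sigma> = mat n n (\<lambda>(i,j). if \<sigma> i = j then 1 else 0)"

definition is_perm_mat :: "nat \<Rightarrow> 'a::{zero,one} mat \<Rightarrow> bool" where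
  "is_perm_mat n P \<longleftrightarrow> (\<exists>\<sigma>. \<sigma> permutes {..<n} \<and> P = perm_mat n \<sigma>)"

definition code_mult :: "'a::field vec set \<Rightarrow> 'a mat \<Rightarrow> 'a vec set" where
  "code_mult C P = (\<lambda>c. transpose_mat P *\<^sub>v c) ` C"

definition perm_class :: "nat \<Rightarrow> 'a::field vec set \<Rightarrow> 'a vec set set" where
  "perm_class n C = {code_mult C P | P. is_perm_mat n P}"

definition GI_reducible :: "nat \<Rightarrow> 'a::field vec set \<Rightarrow> bool" where
  "GI_reducible n C \<longleftrightarrow> (\<exists>a b. a \<noteq> 0 \<and> a + of_nat n * b \<noteq> 0 \<and>
     (let M = a \<cdot>\<^sub>m 1\<^sub>m n + b \<cdot>\<^sub>m all_ones_mat n in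
        (\<forall>C'\<in>perm_class n C. M_LCD n M C') \<and>
        (\<forall>C1\<in>perm_class n C. \<forall>C2\<in>perm_class n C.
           (\<exists>P. is_perm_mat n P \<and> C2 = code_mult C1 P) \<longleftrightarrow>
           (\<exists>P'. is_perm_mat n P' \<and>
                 proj_mat n M C2 = transpose_mat P' * proj_mat n M C1 * P'))))"

definition quad_char :: "'a::field \<Rightarrow> int" where
  "quad_char a = (if a = 0 then 0 else if (\<exists>y. y * y = a) then 1 else -1)"

text \<open>Representative Gram matrix of a nondegenerate symmetric form of type eps on F^n:
  the identity (eps = 1), or diag(1,...,1,gamma) with gamma a fixed non-square (eps = -1).\<close>
definition form_of_type :: "int \<Rightarrow> nat \<Rightarrow> 'a::field mat" where
  "form_of_type eps n = (if eps = 1 then 1\<^sub>m n else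
     (let \<gamma> = (SOME g::'a. g \<noteq> 0 \<and> \<not> (\<exists>y. y * y = g)) in
       mat n n (\<lambda>(i,j). if i = j then (if i = n - 1 then \<gamma> else 1) else 0)))"

end

theory Submission
  imports Defs
begin

text \<open>
  The forms aI + bJ are invariant under coordinate permutations, so a code C is GI-reducible iff
  it is LCD with respect to one of them. For a \<noteq> 0 this means that the hull of C meets the
  hyperplane (x,1) = 0 only in 0, i.e. that C is LCD or its hull is a line spanned by an
  isotropic x with (x,1) \<noteq> 0. Codes of the second kind are counted through the pairs (x, C):
  each hull line has q - 1 generators, and the number of [n,k] codes whose hull is a given
  isotropic line does not depend on the line, because reflections act transitively on the
  nonzero isotropic vectors. For one explicit isotropic x0, C \<mapsto> C/\<langle>x0\<rangle> identifies these codes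
  with the (k-1)-dimensional LCD subspaces of x0^\<bottom>/\<langle>x0\<rangle> \<cong> F^(n-2), whose induced form is
  the identity if -1 is a square and diag(1, ..., 1, \<gamma>) otherwise.
\<close>

section \<open>Odd finite fields\<close>

lemma of_nat_card_UNIV_eq_0: "of_nat (card (UNIV :: 'a::{finite,field} set)) = (0::'a)"
proof -
  have "(\<Sum>x\<in>(UNIV::'a set). x) = (\<Sum>x\<in>(UNIV::'a set). x + 1)"
    by (rule sum.reindex_bij_witness[of _ "\<lambda>x. x + 1" "\<lambda>x. x - 1"]) auto
  also have "\<dots> = (\<Sum>x\<in>(UNIV::'a set). x) + of_nat (card (UNIV :: 'a set))"
    by (simp add: sum.distrib)
  finally show ?thesis by simp
qed

lemma two_neq_zero_if_odd_card:
  assumes "odd (card (UNIV :: 'a::{finite,field} set))"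
  shows "(2::'a) \<noteq> 0"
proof
  assume two: "(2::'a) = 0"
  obtain m where m: "card (UNIV :: 'a set) = 2 * m + 1" using assms oddE by blast
  have "(of_nat (card (UNIV :: 'a set)) :: 'a) = 2 * of_nat m + 1" unfolding m by simp
  with two show False using of_nat_card_UNIV_eq_0[where 'a='a] by simp
qed

lemma card_UNIV_ge_2: "2 \<le> card (UNIV :: 'a::{finite,field} set)"
proof -
  have "card {0::'a, 1} \<le> card (UNIV :: 'a set)" by (rule card_mono) auto
  thus ?thesis by simp
qed

definition is_square :: "'a::field \<Rightarrow> bool" where
  "is_square x \<longleftrightarrow> (\<exists>y. y * y = x)"

lemma card_nonzero_le_twice_card_squares:
  "card (UNIV - {0::'a::{finite,field}}) \<le> 2 * card {x::'a. x \<noteq> 0 \<and> is_square x}"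
proof -
  define Q where "Q = {x::'a. x \<noteq> 0 \<and> is_square x}"
  have U: "UNIV - {0::'a} = (\<Union>s\<in>Q. {y. y * y = s})"
    unfolding Q_def is_square_def by auto
  have fibre: "card {y::'a. y * y = s} \<le> 2" if "s \<in> Q" for s
  proof -
    from that obtain y0 where y0: "y0 * y0 = s" unfolding Q_def is_square_def by auto
    have "{y::'a. y * y = s} \<subseteq> {y0, -y0}"
    proof
      fix y assume "y \<in> {y::'a. y * y = s}"
      hence "(y - y0) * (y + y0) = 0" using y0 by (simp add: algebra_simps)
      thus "y \<in> {y0, -y0}" by (auto simp: add_eq_0_iff)
    qed
    hence "card {y::'a. y * y = s} \<le> card {y0, -y0}" by (intro card_mono) auto
    also have "\<dots> \<le> 2" by (simp add: card_insert_le_m1)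
    finally show ?thesis .
  qed
  have "card (UNIV - {0::'a}) \<le> (\<Sum>s\<in>Q. card {y::'a. y * y = s})"
    unfolding U by (rule card_UN_le) simp
  also have "\<dots> \<le> (\<Sum>s\<in>Q. 2)" by (rule sum_mono) (use fibre in auto)
  finally show ?thesis unfolding Q_def by simp
qed

text \<open>Multiplication by a non-square maps the nonzero squares injectively into the
  non-squares; by the bound above both sets have the same size, so the map is onto.\<close>
lemma nonsquare_mult_nonsquare:
  fixes g h :: "'a::{finite,field}"
  assumes g: "\<not> is_square g" and h: "\<not> is_square h"
  shows "is_square (g * h)"
proof -
  define Q where "Q = {x::'a. x \<noteq> 0 \<and> is_square x}"
  define N where "N = {x::'a. x \<noteq> 0 \<and> \<not> is_square x}"
  have nonzero: "x \<noteq> 0" if "\<not> is_square x" for x :: 'a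
    using that unfolding is_square_def by (metis mult_zero_left)
  have "UNIV - {0::'a} = Q \<union> N" "Q \<inter> N = {}" unfolding Q_def N_def by auto
  hence card_split: "card (UNIV - {0::'a}) = card Q + card N" by (simp add: card_Un_disjoint)
  have into: "(\<lambda>x. g * x) ` Q \<subseteq> N"
  proof
    fix z assume "z \<in> (\<lambda>x. g * x) ` Q"
    then obtain y where y: "y \<noteq> 0" "z = g * (y * y)" unfolding Q_def is_square_def by auto
    have "\<not> is_square z"
    proof
      assume "is_square z"
      then obtain w where "w * w = g * (y * y)" using y unfolding is_square_def by auto
      hence "(w / y) * (w / y) = g" using y by (simp add: field_simps)
      thus False using g unfolding is_square_def by blast
    qed
    thus "z \<in> N" unfolding N_def using nonzero by auto
  qed
  have inj: "inj_on (\<lambda>x. g * x) Q" using nonzero[OF g] by (auto simp: inj_on_def)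
  have "card Q = card N"
    using card_inj_on_le[OF inj into] card_split card_nonzero_le_twice_card_squares[where 'a='a]
    unfolding Q_def by simp
  hence onto: "(\<lambda>x. g * x) ` Q = N"
    using into by (intro card_subset_eq) (auto simp: card_image[OF inj])
  have "h \<in> N" unfolding N_def using h nonzero by auto
  then obtain y where "h = g * (y * y)" using onto unfolding Q_def is_square_def by auto
  hence "(g * y) * (g * y) = g * h" by (simp add: algebra_simps)
  thus ?thesis unfolding is_square_def by blast
qed

lemma exists_nonsquare:
  assumes "odd (card (UNIV :: 'a::{finite,field} set))"
  shows "\<exists>g::'a. g \<noteq> 0 \<and> \<not> is_square g"
proof -
  have "\<not> inj (\<lambda>y::'a. y * y)"
  proof
    assume "inj (\<lambda>y::'a. y * y)"
    hence "(1::'a) = -1" by (rule injD) simp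
    hence "(2::'a) = 0" by (metis one_add_one add_eq_0_iff)
    thus False using two_neq_zero_if_odd_card[OF assms] by simp
  qed
  hence "\<not> surj (\<lambda>y::'a. y * y)" by (metis finite_UNIV_surj_inj finite_class.finite_UNIV)
  then obtain g where "\<forall>y::'a. y * y \<noteq> g" by (metis surj_def)
  thus ?thesis unfolding is_square_def by (metis mult_zero_left)
qed

text \<open>The squares and the translates c - y^2 are two sets of size at least (q+1)/2, so they meet.\<close>
lemma sum_of_two_squares:
  fixes c :: "'a::{finite,field}"
  shows "\<exists>a b. a * a + b * b = c"
proof (rule ccontr)
  assume h: "\<not> (\<exists>a b. a * a + b * b = c)"
  define A where "A = range (\<lambda>a::'a. a * a)"
  define B where "B = (\<lambda>x. c - x) ` A"
  have disj: "A \<inter> B = {}" using h unfolding A_def B_def by (auto simp: algebra_simps eq_diff_eq)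
  have cB: "card B = card A" unfolding B_def by (rule card_image) (auto simp: inj_on_def)
  have "A = insert 0 {x::'a. x \<noteq> 0 \<and> is_square x}" unfolding A_def is_square_def by auto
  hence cA: "card A = card {x::'a. x \<noteq> 0 \<and> is_square x} + 1" by simp
  have "card (UNIV - {0::'a}) = card (UNIV :: 'a set) - 1" by (simp add: card_Diff_singleton)
  hence "card (UNIV :: 'a set) < card A + card B"
    using cA cB card_nonzero_le_twice_card_squares[where 'a='a] by linarith
  also have "\<dots> = card (A \<union> B)" using disj by (simp add: card_Un_disjoint)
  also have "\<dots> \<le> card (UNIV :: 'a set)" by (rule card_mono) auto
  finally show False by simp
qed


section \<open>Codes given by a basis\<close>

definition lin_comb :: "nat \<Rightarrow> nat \<Rightarrow> (nat \<Rightarrow> 'a::field vec) \<Rightarrow> 'a vec \<Rightarrow> 'a vec" where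
  "lin_comb n k g y = vec n (\<lambda>j. \<Sum>i\<in>{0..<k}. y $ i * g i $ j)"

lemma lin_comb_carrier[simp]: "lin_comb n k g y \<in> carrier_vec n"
  unfolding lin_comb_def by simp

lemma lin_comb_dim[simp]: "dim_vec (lin_comb n k g y) = n"
  unfolding lin_comb_def by simp

lemma lin_comb_index[simp]: "j < n \<Longrightarrow> lin_comb n k g y $ j = (\<Sum>i\<in>{0..<k}. y $ i * g i $ j)"
  unfolding lin_comb_def by simp

lemma lin_comb_cong: "(\<And>i. i < k \<Longrightarrow> g i = g' i) \<Longrightarrow> lin_comb n k g = lin_comb n k g'"
  unfolding lin_comb_def by (intro ext eq_vecI) auto

lemma lin_comb_add:
  "y1 \<in> carrier_vec k \<Longrightarrow> y2 \<in> carrier_vec k \<Longrightarrow>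
   lin_comb n k g (y1 + y2) = lin_comb n k g y1 + lin_comb n k g y2"
  by (intro eq_vecI) (auto simp: sum.distrib algebra_simps)

lemma lin_comb_smult: "y \<in> carrier_vec k \<Longrightarrow> lin_comb n k g (t \<cdot>\<^sub>v y) = t \<cdot>\<^sub>v lin_comb n k g y"
  by (intro eq_vecI) (auto simp: sum_distrib_left algebra_simps)

lemma lin_comb_zero: "lin_comb n k g (0\<^sub>v k) = 0\<^sub>v n"
  by (intro eq_vecI) auto

lemma mult_mat_vec_lin_comb:
  assumes T: "T \<in> carrier_mat n' n" and g: "\<And>i. i < k \<Longrightarrow> g i \<in> carrier_vec n"
  shows "T *\<^sub>v lin_comb n k g y = lin_comb n' k (\<lambda>i. T *\<^sub>v g i) y"
proof (intro eq_vecI)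
  have gd: "\<And>i. i < k \<Longrightarrow> dim_vec (g i) = n" using g by auto
  fix l assume "l < dim_vec (lin_comb n' k (\<lambda>i. T *\<^sub>v g i) y)"
  hence l: "l < n'" by simp
  have "(T *\<^sub>v lin_comb n k g y) $ l = (\<Sum>j\<in>{0..<n}. T $$ (l, j) * (\<Sum>i\<in>{0..<k}. y $ i * g i $ j))"
    using T l by (auto simp: scalar_prod_def intro!: sum.cong)
  also have "\<dots> = (\<Sum>i\<in>{0..<k}. y $ i * (\<Sum>j\<in>{0..<n}. T $$ (l, j) * g i $ j))"
    by (simp add: sum_distrib_left sum_distrib_right sum.swap[of _ "{0..<n}"] algebra_simps)
  also have "\<dots> = lin_comb n' k (\<lambda>i. T *\<^sub>v g i) y $ l"
    using T l gd by (auto simp: scalar_prod_def intro!: sum.cong)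
  finally show "(T *\<^sub>v lin_comb n k g y) $ l = lin_comb n' k (\<lambda>i. T *\<^sub>v g i) y $ l" .
qed (use T in auto)

lemma transpose_mult_vec_eq_lin_comb:
  assumes "G \<in> carrier_mat k n" and "y \<in> carrier_vec k"
  shows "transpose_mat G *\<^sub>v y = lin_comb n k (row G) y"
  using assms by (intro eq_vecI) (auto simp: scalar_prod_def intro!: sum.cong)

definition code_basis :: "nat \<Rightarrow> nat \<Rightarrow> (nat \<Rightarrow> 'a::field vec) \<Rightarrow> 'a vec set \<Rightarrow> bool" where
  "code_basis n k g C \<longleftrightarrow> (\<forall>i<k. g i \<in> carrier_vec n) \<and> inj_on (lin_comb n k g) (carrier_vec k)
     \<and> C = lin_comb n k g ` carrier_vec k"

lemma is_code_iff_code_basis: "is_code n k C \<longleftrightarrow> (\<exists>g. code_basis n k g C)"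
proof
  assume "is_code n k C"
  then obtain G where G: "gen_mat n G C" "dim_row G = k" unfolding is_code_def by auto
  have Gc: "G \<in> carrier_mat k n" using G unfolding gen_mat_def by auto
  have eq: "\<And>y. y \<in> carrier_vec k \<Longrightarrow> transpose_mat G *\<^sub>v y = lin_comb n k (row G) y"
    using transpose_mult_vec_eq_lin_comb[OF Gc] by auto
  have "inj_on (lin_comb n k (row G)) (carrier_vec k)"
    using G eq unfolding gen_mat_def inj_on_def by metis
  moreover have "C = lin_comb n k (row G) ` carrier_vec k"
    using G eq unfolding gen_mat_def by (auto simp: image_def)
  moreover have "\<forall>i<k. row G i \<in> carrier_vec n" using Gc by auto
  ultimately show "\<exists>g. code_basis n k g C" unfolding code_basis_def by blast
next
  assume "\<exists>g. code_basis n k g C"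
  then obtain g where g: "code_basis n k g C" by auto
  define G where "G = mat k n (\<lambda>(i,j). g i $ j)"
  have Gc: "G \<in> carrier_mat k n" unfolding G_def by simp
  have "lin_comb n k (row G) = lin_comb n k g"
    using g unfolding code_basis_def by (intro lin_comb_cong eq_vecI) (auto simp: G_def)
  hence eq: "\<And>y. y \<in> carrier_vec k \<Longrightarrow> transpose_mat G *\<^sub>v y = lin_comb n k g y"
    using transpose_mult_vec_eq_lin_comb[OF Gc] by auto
  have "gen_mat n G C"
    using Gc g eq unfolding gen_mat_def code_basis_def inj_on_def by (auto simp: image_def)
  thus "is_code n k C" unfolding is_code_def using Gc by auto
qed

definition is_subspace :: "nat \<Rightarrow> 'a::field vec set \<Rightarrow> bool" where
  "is_subspace n C \<longleftrightarrow> C \<subseteq> carrier_vec n \<and> 0\<^sub>v n \<in> C \<and> (\<forall>u\<in>C. \<forall>w\<in>C. u + w \<in> C)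
     \<and> (\<forall>t. \<forall>u\<in>C. t \<cdot>\<^sub>v u \<in> C)"

lemma code_basis_subspace:
  assumes "code_basis n k g C"
  shows "is_subspace n C"
proof -
  have C: "C = lin_comb n k g ` carrier_vec k" using assms unfolding code_basis_def by auto
  show ?thesis unfolding is_subspace_def C
  proof (intro conjI ballI allI)
    show "0\<^sub>v n \<in> lin_comb n k g ` carrier_vec k"
      using lin_comb_zero[of n k g] by (metis image_eqI zero_carrier_vec)
    fix u w assume "u \<in> lin_comb n k g ` carrier_vec k" "w \<in> lin_comb n k g ` carrier_vec k"
    then obtain y1 y2 where "y1 \<in> carrier_vec k" "y2 \<in> carrier_vec k"
      "u = lin_comb n k g y1" "w = lin_comb n k g y2" by auto
    thus "u + w \<in> lin_comb n k g ` carrier_vec k" using lin_comb_add by (metis add_carrier_vec image_eqI)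
  next
    fix t u assume "u \<in> lin_comb n k g ` carrier_vec k"
    then obtain y where "y \<in> carrier_vec k" "u = lin_comb n k g y" by auto
    thus "t \<cdot>\<^sub>v u \<in> lin_comb n k g ` carrier_vec k" using lin_comb_smult by (metis smult_carrier_vec image_eqI)
  qed auto
qed

lemma is_code_subspace: "is_code n k C \<Longrightarrow> is_subspace n C"
  using is_code_iff_code_basis code_basis_subspace by blast

lemma is_code_carrier: "is_code n k C \<Longrightarrow> C \<subseteq> carrier_vec n"
  using is_code_subspace unfolding is_subspace_def by blast

lemma subspace_lin_comb2:
  "is_subspace n C \<Longrightarrow> u \<in> C \<Longrightarrow> w \<in> C \<Longrightarrow> a \<cdot>\<^sub>v u + b \<cdot>\<^sub>v w \<in> C"
  unfolding is_subspace_def by auto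

lemma subspace_diff:
  assumes "is_subspace n C" "u \<in> C" "w \<in> C"
  shows "u - w \<in> C"
proof -
  have "u - w = 1 \<cdot>\<^sub>v u + (-1) \<cdot>\<^sub>v w" using assms unfolding is_subspace_def by (intro eq_vecI) auto
  thus ?thesis using subspace_lin_comb2[OF assms, of 1 "-1"] by simp
qed

lemma code_basis_image:
  assumes g: "code_basis n k g C" and T: "T \<in> carrier_mat n n"
    and inj: "inj_on (\<lambda>v. T *\<^sub>v v) (carrier_vec n)"
  shows "code_basis n k (\<lambda>i. T *\<^sub>v g i) ((\<lambda>c. T *\<^sub>v c) ` C)"
proof -
  have gi: "\<And>i. i < k \<Longrightarrow> g i \<in> carrier_vec n" and injg: "inj_on (lin_comb n k g) (carrier_vec k)"
    and C: "C = lin_comb n k g ` carrier_vec k" using g unfolding code_basis_def by auto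
  have eq: "lin_comb n k (\<lambda>i. T *\<^sub>v g i) y = T *\<^sub>v lin_comb n k g y" for y
    using mult_mat_vec_lin_comb[OF T gi] by simp
  show ?thesis unfolding code_basis_def
  proof (intro conjI allI impI)
    show "inj_on (lin_comb n k (\<lambda>i. T *\<^sub>v g i)) (carrier_vec k)"
      unfolding inj_on_def eq using inj injg unfolding inj_on_def by (metis lin_comb_carrier)
    show "(\<lambda>c. T *\<^sub>v c) ` C = lin_comb n k (\<lambda>i. T *\<^sub>v g i) ` carrier_vec k"
      unfolding C eq by (simp add: image_image)
  qed (use gi T in auto)
qed

lemma is_code_image:
  assumes "is_code n k C" and "T \<in> carrier_mat n n" and "inj_on (\<lambda>v. T *\<^sub>v v) (carrier_vec n)"
  shows "is_code n k ((\<lambda>c. T *\<^sub>v c) ` C)"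
  using assms code_basis_image unfolding is_code_iff_code_basis by blast

lemma finite_carrier_vec: "finite (carrier_vec n :: 'a::finite vec set)"
proof -
  have "carrier_vec n \<subseteq> vec_of_list ` {xs :: 'a list. set xs \<subseteq> UNIV \<and> length xs = n}"
  proof
    fix v :: "'a vec" assume "v \<in> carrier_vec n"
    thus "v \<in> vec_of_list ` {xs. set xs \<subseteq> UNIV \<and> length xs = n}"
      by (intro image_eqI[of _ _ "list_of_vec v"]) (auto simp: vec_list)
  qed
  moreover have "finite {xs :: 'a list. set xs \<subseteq> UNIV \<and> length xs = n}"
    by (rule finite_lists_length_eq) simp
  ultimately show ?thesis by (meson finite_surj)
qed

lemma finite_codes: "finite {C :: 'a::{finite,field} vec set. is_code n k C \<and> P C}"
proof -
  have "{C :: 'a vec set. is_code n k C \<and> P C} \<subseteq> Pow (carrier_vec n)" using is_code_carrier by blast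
  thus ?thesis using finite_carrier_vec by (metis finite_Pow_iff rev_finite_subset)
qed


section \<open>LCD codes with respect to a bilinear form\<close>

definition lcd_wrt :: "nat \<Rightarrow> 'a::field mat \<Rightarrow> 'a vec set \<Rightarrow> bool" where
  "lcd_wrt n B C \<longleftrightarrow> (\<forall>c'\<in>C. (\<forall>c\<in>C. c \<bullet> (B *\<^sub>v c') = 0) \<longrightarrow> c' = 0\<^sub>v n)"

lemma scalar_prod_gram_mat:
  fixes G :: "'a::field mat"
  assumes G: "G \<in> carrier_mat k n" and B: "B \<in> carrier_mat n n"
    and z: "z \<in> carrier_vec k" and y: "y \<in> carrier_vec k"
  shows "z \<bullet> ((G * B * transpose_mat G) *\<^sub>v y)
       = (transpose_mat G *\<^sub>v z) \<bullet> (B *\<^sub>v (transpose_mat G *\<^sub>v y))"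
proof -
  have "(G * B * transpose_mat G) *\<^sub>v y = G *\<^sub>v (B *\<^sub>v (transpose_mat G *\<^sub>v y))"
    using G B y by (simp add: assoc_mult_mat_vec[of _ k n _ k])
  moreover have "(transpose_mat G *\<^sub>v z) \<bullet> (B *\<^sub>v (transpose_mat G *\<^sub>v y))
               = z \<bullet> (G *\<^sub>v (B *\<^sub>v (transpose_mat G *\<^sub>v y)))"
    by (rule transpose_vec_mult_scalar[of G k n]) (use G B y z in auto)
  ultimately show ?thesis by simp
qed

lemma gram_mult_vec_eq_zero_iff:
  fixes G :: "'a::field mat"
  assumes G: "G \<in> carrier_mat k n" and B: "B \<in> carrier_mat n n"
    and C: "C = (\<lambda>v. transpose_mat G *\<^sub>v v) ` carrier_vec k" and y: "y \<in> carrier_vec k"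
  shows "(G * B * transpose_mat G) *\<^sub>v y = 0\<^sub>v k \<longleftrightarrow> (\<forall>c\<in>C. c \<bullet> (B *\<^sub>v (transpose_mat G *\<^sub>v y)) = 0)"
proof
  let ?A = "G * B * transpose_mat G"
  assume Ay: "?A *\<^sub>v y = 0\<^sub>v k"
  show "\<forall>c\<in>C. c \<bullet> (B *\<^sub>v (transpose_mat G *\<^sub>v y)) = 0"
  proof
    fix c assume "c \<in> C"
    then obtain z where z: "z \<in> carrier_vec k" "c = transpose_mat G *\<^sub>v z" using C by auto
    have "c \<bullet> (B *\<^sub>v (transpose_mat G *\<^sub>v y)) = z \<bullet> (?A *\<^sub>v y)"
      unfolding z(2) by (rule scalar_prod_gram_mat[OF G B z(1) y, symmetric])
    thus "c \<bullet> (B *\<^sub>v (transpose_mat G *\<^sub>v y)) = 0" using Ay z by simp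
  qed
next
  let ?A = "G * B * transpose_mat G"
  have A: "?A \<in> carrier_mat k k" using G B by auto
  assume orth: "\<forall>c\<in>C. c \<bullet> (B *\<^sub>v (transpose_mat G *\<^sub>v y)) = 0"
  show "?A *\<^sub>v y = 0\<^sub>v k"
  proof (rule eq_vecI)
    fix i assume "i < dim_vec (0\<^sub>v k :: 'a vec)"
    hence i: "i < k" by simp
    have "(?A *\<^sub>v y) $ i = unit_vec k i \<bullet> (?A *\<^sub>v y)" using A i y by simp
    also have "\<dots> = (transpose_mat G *\<^sub>v unit_vec k i) \<bullet> (B *\<^sub>v (transpose_mat G *\<^sub>v y))"
      by (rule scalar_prod_gram_mat[OF G B _ y]) simp
    also have "\<dots> = 0" using orth C i by (metis image_eqI unit_vec_carrier)
    finally show "(?A *\<^sub>v y) $ i = 0\<^sub>v k $ i" using i by simp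
  qed (use A G in simp)
qed

lemma det_gram_neq_0_iff_lcd_wrt:
  assumes gen: "gen_mat n G C" and B: "B \<in> carrier_mat n n"
  shows "det (G * B * transpose_mat G) \<noteq> 0 \<longleftrightarrow> lcd_wrt n B C"
proof -
  define k where "k = dim_row G"
  have G: "G \<in> carrier_mat k n" using gen unfolding gen_mat_def k_def by auto
  have inj: "inj_on (\<lambda>v. transpose_mat G *\<^sub>v v) (carrier_vec k)"
    and C: "C = (\<lambda>v. transpose_mat G *\<^sub>v v) ` carrier_vec k"
    using gen unfolding gen_mat_def k_def by auto
  have GT0: "transpose_mat G *\<^sub>v 0\<^sub>v k = 0\<^sub>v n" using G by auto
  let ?A = "G * B * transpose_mat G"
  note kernel = gram_mult_vec_eq_zero_iff[OF G B C]
  have "lcd_wrt n B C \<longleftrightarrow> (\<forall>y\<in>carrier_vec k. ?A *\<^sub>v y = 0\<^sub>v k \<longrightarrow> y = 0\<^sub>v k)"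
  proof
    assume l: "lcd_wrt n B C"
    show "\<forall>y\<in>carrier_vec k. ?A *\<^sub>v y = 0\<^sub>v k \<longrightarrow> y = 0\<^sub>v k"
    proof (intro ballI impI)
      fix y assume y: "y \<in> carrier_vec k" and "?A *\<^sub>v y = 0\<^sub>v k"
      hence "\<forall>c\<in>C. c \<bullet> (B *\<^sub>v (transpose_mat G *\<^sub>v y)) = 0" using kernel[OF y] by simp
      moreover have "transpose_mat G *\<^sub>v y \<in> C" using C y by auto
      ultimately have "transpose_mat G *\<^sub>v y = 0\<^sub>v n" using l unfolding lcd_wrt_def by blast
      hence "transpose_mat G *\<^sub>v y = transpose_mat G *\<^sub>v 0\<^sub>v k" using GT0 by simp
      thus "y = 0\<^sub>v k" using inj_onD[OF inj _ y zero_carrier_vec] by simp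
    qed
  next
    assume H: "\<forall>y\<in>carrier_vec k. ?A *\<^sub>v y = 0\<^sub>v k \<longrightarrow> y = 0\<^sub>v k"
    show "lcd_wrt n B C" unfolding lcd_wrt_def
    proof (intro ballI impI)
      fix c' assume "c' \<in> C" and orth: "\<forall>c\<in>C. c \<bullet> (B *\<^sub>v c') = 0"
      then obtain y where y: "y \<in> carrier_vec k" "c' = transpose_mat G *\<^sub>v y" using C by auto
      hence "y = 0\<^sub>v k" using H kernel[OF y(1)] orth by simp
      thus "c' = 0\<^sub>v n" using y GT0 by simp
    qed
  qed
  moreover have "det ?A \<noteq> 0 \<longleftrightarrow> (\<forall>y\<in>carrier_vec k. ?A *\<^sub>v y = 0\<^sub>v k \<longrightarrow> y = 0\<^sub>v k)"
    using det_0_iff_vec_prod_zero_field[of ?A k] G B by auto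
  ultimately show ?thesis by simp
qed

lemma M_LCD_iff_lcd_wrt:
  assumes "is_code n k C" and "B \<in> carrier_mat n n"
  shows "M_LCD n B C \<longleftrightarrow> lcd_wrt n B C"
proof -
  obtain G where "gen_mat n G C" using assms unfolding is_code_def by auto
  thus ?thesis unfolding M_LCD_def using det_gram_neq_0_iff_lcd_wrt[OF _ assms(2)] by blast
qed

lemma code_hull_eq:
  "C \<subseteq> carrier_vec n \<Longrightarrow> code_hull n C = {c \<in> C. \<forall>c'\<in>C. c \<bullet> c' = 0}"
  unfolding code_hull_def dual_code_def by auto

lemma code_hull_subset: "code_hull n C \<subseteq> C"
  unfolding code_hull_def by auto

lemma zero_in_code_hull: "is_subspace n C \<Longrightarrow> 0\<^sub>v n \<in> code_hull n C"
  unfolding code_hull_def dual_code_def is_subspace_def by auto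

lemma code_hull_lin_comb2:
  assumes S: "is_subspace n C" and y: "y \<in> code_hull n C" and z: "z \<in> code_hull n C"
  shows "\<alpha> \<cdot>\<^sub>v y + \<beta> \<cdot>\<^sub>v z \<in> code_hull n C"
proof -
  have Cc: "C \<subseteq> carrier_vec n" using S unfolding is_subspace_def by auto
  have yc: "y \<in> carrier_vec n" and zc: "z \<in> carrier_vec n" using y z Cc code_hull_subset by blast+
  have "(\<alpha> \<cdot>\<^sub>v y + \<beta> \<cdot>\<^sub>v z) \<bullet> c' = \<alpha> * (y \<bullet> c') + \<beta> * (z \<bullet> c')" if "c' \<in> C" for c'
    using yc zc that Cc by (subst add_scalar_prod_distrib[of _ n]) auto
  moreover have "\<alpha> \<cdot>\<^sub>v y + \<beta> \<cdot>\<^sub>v z \<in> C" using subspace_lin_comb2[OF S] y z code_hull_subset by blast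
  ultimately show ?thesis using y z unfolding code_hull_eq[OF Cc] by auto
qed


section \<open>Permutations and the forms aI + bJ\<close>

definition perm_act :: "nat \<Rightarrow> (nat \<Rightarrow> nat) \<Rightarrow> 'a::field vec \<Rightarrow> 'a vec" where
  "perm_act n \<sigma> v = transpose_mat (perm_mat n \<sigma>) *\<^sub>v v"

lemma perm_mat_carrier[simp]: "perm_mat n \<sigma> \<in> carrier_mat n n"
  unfolding perm_mat_def by simp

lemma perm_mat_mult_vec_carrier[simp]: "v \<in> carrier_vec n \<Longrightarrow> perm_mat n \<sigma> *\<^sub>v v \<in> carrier_vec n"
  by (rule mult_mat_vec_carrier[OF perm_mat_carrier])

lemma permutes_lessThan_lt: "\<sigma> permutes {..<n} \<Longrightarrow> i < n \<Longrightarrow> \<sigma> i < n"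
  using permutes_in_image[of \<sigma> "{..<n}" i] by auto

lemma permutes_lessThan_inv_lt: "\<sigma> permutes {..<n} \<Longrightarrow> i < n \<Longrightarrow> Hilbert_Choice.inv \<sigma> i < n"
  using permutes_lessThan_lt[OF permutes_inv] by blast

lemma perm_act_eq:
  assumes s: "\<sigma> permutes {..<n}" and v: "(v :: 'a::field vec) \<in> carrier_vec n"
  shows "perm_act n \<sigma> v = vec n (\<lambda>i. v $ Hilbert_Choice.inv \<sigma> i)"
proof (intro eq_vecI)
  fix i assume "i < dim_vec (vec n (\<lambda>i. v $ Hilbert_Choice.inv \<sigma> i))"
  hence i: "i < n" by simp
  have "perm_act n \<sigma> v $ i = (\<Sum>j\<in>{0..<n}. (if \<sigma> j = i then 1 else 0) * v $ j)"
    using i v by (auto simp: perm_act_def perm_mat_def scalar_prod_def intro!: sum.cong)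
  also have "\<dots> = (\<Sum>j\<in>{0..<n}. (if j = Hilbert_Choice.inv \<sigma> i then v $ j else 0))"
    by (rule sum.cong) (auto simp: permutes_inverses[OF s])
  also have "\<dots> = v $ Hilbert_Choice.inv \<sigma> i" using permutes_lessThan_inv_lt[OF s i] by simp
  finally show "perm_act n \<sigma> v $ i = vec n (\<lambda>i. v $ Hilbert_Choice.inv \<sigma> i) $ i" using i by simp
qed (simp add: perm_act_def perm_mat_def)

lemma perm_mat_mult_vec:
  assumes s: "\<sigma> permutes {..<n}" and v: "(v :: 'a::field vec) \<in> carrier_vec n"
  shows "perm_mat n \<sigma> *\<^sub>v v = vec n (\<lambda>i. v $ \<sigma> i)"
proof (intro eq_vecI)
  fix i assume "i < dim_vec (vec n (\<lambda>i. v $ \<sigma> i))"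
  hence i: "i < n" by simp
  have "(perm_mat n \<sigma> *\<^sub>v v) $ i = (\<Sum>j\<in>{0..<n}. (if \<sigma> i = j then 1 else 0) * v $ j)"
    using i v by (auto simp: perm_mat_def scalar_prod_def intro!: sum.cong)
  also have "\<dots> = (\<Sum>j\<in>{0..<n}. (if j = \<sigma> i then v $ j else 0))"
    by (rule sum.cong) auto
  also have "\<dots> = v $ \<sigma> i" using permutes_lessThan_lt[OF s i] by simp
  finally show "(perm_mat n \<sigma> *\<^sub>v v) $ i = vec n (\<lambda>i. v $ \<sigma> i) $ i" using i by simp
qed (simp add: perm_mat_def)

lemma perm_act_carrier[simp]: "v \<in> carrier_vec n \<Longrightarrow> perm_act n \<sigma> v \<in> carrier_vec n"
  unfolding perm_act_def by (rule mult_mat_vec_carrier[of _ n n]) simp_all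

lemma perm_act_zero: "\<sigma> permutes {..<n} \<Longrightarrow> perm_act n \<sigma> (0\<^sub>v n) = (0\<^sub>v n :: 'a::field vec)"
  by (subst perm_act_eq) (auto intro!: eq_vecI simp: permutes_lessThan_inv_lt)

lemma perm_act_id: "v \<in> carrier_vec n \<Longrightarrow> perm_act n id v = (v :: 'a::field vec)"
  by (subst perm_act_eq) (auto simp: inv_id intro!: eq_vecI)

lemma perm_act_lin_comb2:
  assumes "u \<in> carrier_vec n" "w \<in> carrier_vec n"
  shows "perm_act n \<sigma> (x \<cdot>\<^sub>v u + y \<cdot>\<^sub>v w) = x \<cdot>\<^sub>v perm_act n \<sigma> u + y \<cdot>\<^sub>v perm_act n \<sigma> w"
proof -
  have P: "transpose_mat (perm_mat n \<sigma>) \<in> carrier_mat n n" by simp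
  show ?thesis unfolding perm_act_def using assms
    by (simp add: mult_add_distrib_mat_vec[OF P] mult_mat_vec[OF P])
qed

lemma perm_mat_mult_perm_act:
  assumes s: "\<sigma> permutes {..<n}" and v: "v \<in> carrier_vec n"
  shows "perm_mat n \<sigma> *\<^sub>v perm_act n \<sigma> v = v"
  unfolding perm_act_eq[OF s v] using v
  by (subst perm_mat_mult_vec[OF s])
    (auto simp: permutes_inverses[OF s] permutes_lessThan_lt[OF s])

lemma inj_on_perm_act: "\<sigma> permutes {..<n} \<Longrightarrow> inj_on (perm_act n \<sigma>) (carrier_vec n)"
  unfolding inj_on_def by (metis perm_mat_mult_perm_act)

lemma perm_mat_image_carrier:
  assumes s: "\<sigma> permutes {..<n}"
  shows "(\<lambda>v. perm_mat n \<sigma> *\<^sub>v v) ` carrier_vec n = (carrier_vec n :: 'a::field vec set)"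
proof
  show "(carrier_vec n :: 'a vec set) \<subseteq> (\<lambda>v. perm_mat n \<sigma> *\<^sub>v v) ` carrier_vec n"
  proof
    fix w :: "'a vec" assume w: "w \<in> carrier_vec n"
    hence "w = perm_mat n \<sigma> *\<^sub>v perm_act n \<sigma> w" using perm_mat_mult_perm_act[OF s w] by simp
    thus "w \<in> (\<lambda>v. perm_mat n \<sigma> *\<^sub>v v) ` carrier_vec n" using w by auto
  qed
qed auto

lemma sum_permutes_inv:
  fixes n :: nat
  assumes "\<sigma> permutes {..<n}"
  shows "(\<Sum>i\<in>{0..<n}. f (Hilbert_Choice.inv \<sigma> i)) = (\<Sum>i\<in>{0..<n}. f i)"
proof -
  have "Hilbert_Choice.inv \<sigma> permutes {0..<n}" using permutes_inv[OF assms] by (simp add: atLeast0LessThan)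
  thus ?thesis by (rule sum.permute[symmetric, where g = f, unfolded comp_def])
qed

lemma perm_act_scalar_prod:
  assumes s: "\<sigma> permutes {..<n}" and u: "u \<in> carrier_vec n" and v: "v \<in> carrier_vec n"
  shows "perm_act n \<sigma> u \<bullet> perm_act n \<sigma> v = u \<bullet> v"
  using sum_permutes_inv[OF s, of "\<lambda>i. u $ i * v $ i"] v
  unfolding perm_act_eq[OF s u] perm_act_eq[OF s v] scalar_prod_def by simp

lemma all_ones_vec_carrier[simp]: "all_ones_vec n \<in> carrier_vec n"
  unfolding all_ones_vec_def by simp

lemma scalar_prod_all_ones:
  "(v::'a::field vec) \<in> carrier_vec n \<Longrightarrow> v \<bullet> all_ones_vec n = (\<Sum>i\<in>{0..<n}. v $ i)"
  unfolding all_ones_vec_def scalar_prod_def by (intro sum.cong) auto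

lemma perm_act_scalar_prod_all_ones:
  assumes s: "\<sigma> permutes {..<n}" and u: "u \<in> carrier_vec n"
  shows "perm_act n \<sigma> u \<bullet> all_ones_vec n = u \<bullet> all_ones_vec n"
  using sum_permutes_inv[OF s, of "\<lambda>i. u $ i"] u
  by (simp add: scalar_prod_all_ones perm_act_eq[OF s u])

lemma perm_act_all_ones:
  "\<sigma> permutes {..<n} \<Longrightarrow> perm_act n \<sigma> (all_ones_vec n) = (all_ones_vec n :: 'a::field vec)"
  by (subst perm_act_eq) (auto intro!: eq_vecI simp: all_ones_vec_def permutes_lessThan_inv_lt)

lemma code_mult_perm_mat: "code_mult C (perm_mat n \<sigma>) = perm_act n \<sigma> ` C"
  unfolding code_mult_def perm_act_def by simp

lemma is_code_perm_act:
  assumes "is_code n k C" and "\<sigma> permutes {..<n}"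
  shows "is_code n k (perm_act n \<sigma> ` C)"
proof -
  have e: "perm_act n \<sigma> = (\<lambda>v. transpose_mat (perm_mat n \<sigma>) *\<^sub>v v)"
    by (rule ext) (simp add: perm_act_def)
  show ?thesis unfolding e
    by (rule is_code_image[OF assms(1)]) (use inj_on_perm_act[OF assms(2)] in \<open>simp_all add: e\<close>)
qed

lemma mem_perm_class_iff:
  "C' \<in> perm_class n C \<longleftrightarrow> (\<exists>\<sigma>. \<sigma> permutes {..<n} \<and> C' = perm_act n \<sigma> ` C)"
  unfolding perm_class_def is_perm_mat_def using code_mult_perm_mat by blast

definition gi_mat :: "nat \<Rightarrow> 'a::field \<Rightarrow> 'a \<Rightarrow> 'a mat" where
  "gi_mat n a b = a \<cdot>\<^sub>m 1\<^sub>m n + b \<cdot>\<^sub>m all_ones_mat n"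

lemma gi_mat_carrier[simp]: "gi_mat n a b \<in> carrier_mat n n"
  unfolding gi_mat_def all_ones_mat_def by simp

lemma gi_mat_mult_vec_carrier[simp]: "v \<in> carrier_vec n \<Longrightarrow> gi_mat n a b *\<^sub>v v \<in> carrier_vec n"
  by (rule mult_mat_vec_carrier[OF gi_mat_carrier])

lemma gi_mat_mult_vec:
  assumes v: "v \<in> carrier_vec n"
  shows "gi_mat n a b *\<^sub>v v = a \<cdot>\<^sub>v v + (b * (v \<bullet> all_ones_vec n)) \<cdot>\<^sub>v all_ones_vec n"
proof (intro eq_vecI)
  fix i assume "i < dim_vec (a \<cdot>\<^sub>v v + (b * (v \<bullet> all_ones_vec n)) \<cdot>\<^sub>v all_ones_vec n)"
  hence i: "i < n" using v by (simp add: all_ones_vec_def)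
  have "(gi_mat n a b *\<^sub>v v) $ i = (\<Sum>j\<in>{0..<n}. (if j = i then a * v $ j else 0) + b * v $ j)"
    using i v by (auto simp: gi_mat_def all_ones_mat_def scalar_prod_def algebra_simps intro!: sum.cong)
  also have "\<dots> = a * v $ i + b * (\<Sum>j\<in>{0..<n}. v $ j)"
    using i by (simp add: sum.distrib sum_distrib_left)
  finally show "(gi_mat n a b *\<^sub>v v) $ i = (a \<cdot>\<^sub>v v + (b * (v \<bullet> all_ones_vec n)) \<cdot>\<^sub>v all_ones_vec n) $ i"
    unfolding scalar_prod_all_ones[OF v] using i v by (simp add: all_ones_vec_def)
qed (use v in \<open>auto simp: gi_mat_def all_ones_mat_def all_ones_vec_def\<close>)

lemma scalar_prod_gi_mat:
  assumes u: "u \<in> carrier_vec n" and v: "v \<in> carrier_vec n"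
  shows "u \<bullet> (gi_mat n a b *\<^sub>v v) = a * (u \<bullet> v) + b * (u \<bullet> all_ones_vec n) * (v \<bullet> all_ones_vec n)"
  unfolding gi_mat_mult_vec[OF v] using u v
  by (subst scalar_prod_add_distrib[of _ n]) (auto simp: algebra_simps)

lemma gi_mat_sym:
  assumes u: "u \<in> carrier_vec n" and v: "v \<in> carrier_vec n"
  shows "u \<bullet> (gi_mat n a b *\<^sub>v v) = v \<bullet> (gi_mat n a b *\<^sub>v u)"
  unfolding scalar_prod_gi_mat[OF u v] scalar_prod_gi_mat[OF v u] using comm_scalar_prod[OF u v] by simp

lemma gi_mat_mult_perm_act:
  assumes s: "\<sigma> permutes {..<n}" and v: "v \<in> carrier_vec n"
  shows "gi_mat n a b *\<^sub>v perm_act n \<sigma> v = perm_act n \<sigma> (gi_mat n a b *\<^sub>v v)"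
  unfolding gi_mat_mult_vec[OF perm_act_carrier[OF v]] gi_mat_mult_vec[OF v]
    perm_act_lin_comb2[OF v all_ones_vec_carrier] perm_act_all_ones[OF s]
    perm_act_scalar_prod_all_ones[OF s v] by simp

lemma perm_act_gi_form:
  assumes s: "\<sigma> permutes {..<n}" and u: "u \<in> carrier_vec n" and w: "w \<in> carrier_vec n"
  shows "perm_act n \<sigma> u \<bullet> (gi_mat n a b *\<^sub>v perm_act n \<sigma> w) = u \<bullet> (gi_mat n a b *\<^sub>v w)"
  using scalar_prod_gi_mat[OF perm_act_carrier[OF u] perm_act_carrier[OF w]] scalar_prod_gi_mat[OF u w]
  by (simp add: perm_act_scalar_prod[OF s u w] perm_act_scalar_prod_all_ones[OF s u]
      perm_act_scalar_prod_all_ones[OF s w])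

lemma lcd_wrt_gi_mat_perm_act:
  assumes s: "\<sigma> permutes {..<n}" and Cc: "C \<subseteq> carrier_vec n" and l: "lcd_wrt n (gi_mat n a b) C"
  shows "lcd_wrt n (gi_mat n a b) (perm_act n \<sigma> ` C)"
  unfolding lcd_wrt_def
proof (intro ballI impI)
  fix c' assume "c' \<in> perm_act n \<sigma> ` C"
    and orth: "\<forall>c\<in>perm_act n \<sigma> ` C. c \<bullet> (gi_mat n a b *\<^sub>v c') = 0"
  then obtain w where w: "w \<in> C" "c' = perm_act n \<sigma> w" by auto
  have "\<forall>c\<in>C. c \<bullet> (gi_mat n a b *\<^sub>v w) = 0"
    using orth w Cc perm_act_gi_form[OF s] by (metis image_eqI subsetD)
  hence "w = 0\<^sub>v n" using l w unfolding lcd_wrt_def by auto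
  thus "c' = 0\<^sub>v n" using w perm_act_zero[OF s] by simp
qed


section \<open>The projection matrix\<close>

lemma mat_inv_props:
  fixes A :: "'a::field mat"
  assumes A: "A \<in> carrier_mat k k" and d: "det A \<noteq> 0"
  shows "mat_inv A \<in> carrier_mat k k" "A * mat_inv A = 1\<^sub>m k" "mat_inv A * A = 1\<^sub>m k"
proof -
  have "A \<in> Units (ring_mat TYPE('a) k ())" by (rule det_non_zero_imp_unit[OF A d])
  then obtain B where "B \<in> carrier_mat k k" "A * B = 1\<^sub>m k" "B * A = 1\<^sub>m k"
    unfolding Units_def ring_mat_def by auto
  hence "\<exists>B. B \<in> carrier_mat (dim_row A) (dim_row A) \<and> A * B = 1\<^sub>m (dim_row A) \<and> B * A = 1\<^sub>m (dim_row A)"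
    using A by auto
  from someI_ex[OF this] show "mat_inv A \<in> carrier_mat k k" "A * mat_inv A = 1\<^sub>m k" "mat_inv A * A = 1\<^sub>m k"
    unfolding mat_inv_def using A by auto
qed

lemma proj_mat_factor:
  fixes M :: "'a::field mat"
  assumes code: "is_code n k C" and M: "M \<in> carrier_mat n n" and lcd: "lcd_wrt n M C"
  obtains k' G X where "G \<in> carrier_mat k' n" "X \<in> carrier_mat n k'"
    "C = (\<lambda>v. transpose_mat G *\<^sub>v v) ` carrier_vec k'"
    "proj_mat n M C = X * G" "G * X = 1\<^sub>m k'" "X * (G * M * transpose_mat G) = M * transpose_mat G"
proof -
  define G where "G = (SOME G. gen_mat n G C)"
  have "\<exists>G. gen_mat n G C" using code unfolding is_code_def by auto
  hence gen: "gen_mat n G C" unfolding G_def by (rule someI_ex)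
  define k' where "k' = dim_row G"
  have G: "G \<in> carrier_mat k' n" using gen unfolding gen_mat_def k'_def by auto
  define A where "A = G * M * transpose_mat G"
  have A: "A \<in> carrier_mat k' k'" unfolding A_def using G M by auto
  have "det A \<noteq> 0" unfolding A_def using det_gram_neq_0_iff_lcd_wrt[OF gen M] lcd by simp
  note Ai = mat_inv_props[OF A this]
  define X where "X = M * transpose_mat G * mat_inv A"
  have X: "X \<in> carrier_mat n k'" unfolding X_def using M G Ai by auto
  show thesis
  proof (rule that[OF G X])
    show "C = (\<lambda>v. transpose_mat G *\<^sub>v v) ` carrier_vec k'"
      using gen unfolding gen_mat_def k'_def by auto
    show "proj_mat n M C = X * G" unfolding proj_mat_def Let_def G_def[symmetric] X_def A_def ..
    have "G * X = G * M * transpose_mat G * mat_inv A" unfolding X_def using G M Ai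
      by (simp add: assoc_mult_mat[of _ k' n _ n _ k'] assoc_mult_mat[of _ n n _ k' _ k']
          assoc_mult_mat[of _ k' n _ k' _ k'])
    thus "G * X = 1\<^sub>m k'" using Ai unfolding A_def by simp
    have "X * A = M * transpose_mat G * (mat_inv A * A)" unfolding X_def
      by (rule assoc_mult_mat[of _ n k' _ k' _ k']) (use M G Ai A in auto)
    thus "X * (G * M * transpose_mat G) = M * transpose_mat G" using Ai M G unfolding A_def by simp
  qed
qed

lemma proj_mat_props:
  fixes M :: "'a::field mat"
  assumes code: "is_code n k C" and M: "M \<in> carrier_mat n n" and lcd: "lcd_wrt n M C"
  shows "proj_mat n M C \<in> carrier_mat n n"
    "\<And>v. v \<in> carrier_vec n \<Longrightarrow> transpose_mat (proj_mat n M C) *\<^sub>v v \<in> C"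
    "\<And>c. c \<in> C \<Longrightarrow> transpose_mat (proj_mat n M C) *\<^sub>v c = c"
    "\<And>c. c \<in> C \<Longrightarrow> proj_mat n M C *\<^sub>v (M *\<^sub>v c) = M *\<^sub>v c"
proof -
  obtain k' G X where G: "G \<in> carrier_mat k' n" and X: "X \<in> carrier_mat n k'"
    and C: "C = (\<lambda>v. transpose_mat G *\<^sub>v v) ` carrier_vec k'" and P: "proj_mat n M C = X * G"
    and GX: "G * X = 1\<^sub>m k'" and XA: "X * (G * M * transpose_mat G) = M * transpose_mat G"
    by (rule proj_mat_factor[OF code M lcd])
  show "proj_mat n M C \<in> carrier_mat n n" unfolding P using X G by auto
  have PT: "transpose_mat (proj_mat n M C) *\<^sub>v v = transpose_mat G *\<^sub>v (transpose_mat X *\<^sub>v v)"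
    if "v \<in> carrier_vec n" for v
    unfolding P transpose_mult[OF X G] using that X G by (simp add: assoc_mult_mat_vec[of _ n k' _ n])
  show "transpose_mat (proj_mat n M C) *\<^sub>v v \<in> C" if "v \<in> carrier_vec n" for v
  proof -
    have "transpose_mat X *\<^sub>v v \<in> carrier_vec k'" using X that by auto
    thus ?thesis unfolding PT[OF that] by (subst C) (rule imageI)
  qed
  show "transpose_mat (proj_mat n M C) *\<^sub>v c = c" if "c \<in> C" for c
  proof -
    obtain y where y: "y \<in> carrier_vec k'" "c = transpose_mat G *\<^sub>v y" using \<open>c \<in> C\<close> C by auto
    have "transpose_mat X *\<^sub>v c = (transpose_mat X * transpose_mat G) *\<^sub>v y"
      unfolding y(2) using X G y by (simp add: assoc_mult_mat_vec[of _ k' n _ k'])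
    also have "transpose_mat X * transpose_mat G = 1\<^sub>m k'"
      using transpose_mult[OF G X] GX by simp
    finally show ?thesis using PT[of c] y G by simp
  qed
  show "proj_mat n M C *\<^sub>v (M *\<^sub>v c) = M *\<^sub>v c" if "c \<in> C" for c
  proof -
    obtain y where y: "y \<in> carrier_vec k'" "c = transpose_mat G *\<^sub>v y" using \<open>c \<in> C\<close> C by auto
    have GMc: "G *\<^sub>v (M *\<^sub>v c) = (G * M * transpose_mat G) *\<^sub>v y"
      unfolding y(2) using G M y
      by (simp add: assoc_mult_mat_vec[of _ k' n _ n] assoc_mult_mat_vec[of _ n n _ k']
          assoc_mult_mat_vec[of _ k' n _ k'])
    have "proj_mat n M C *\<^sub>v (M *\<^sub>v c) = X *\<^sub>v (G *\<^sub>v (M *\<^sub>v c))"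
      unfolding P using X G M y(1) y(2) by (simp add: assoc_mult_mat_vec[of _ n k' _ n])
    also have "\<dots> = (X * (G * M * transpose_mat G)) *\<^sub>v y"
      unfolding GMc using X G M y by (simp add: assoc_mult_mat_vec[of _ n k' _ k'])
    also have "\<dots> = M *\<^sub>v c" unfolding XA y(2) using M G y by (simp add: assoc_mult_mat_vec[of _ n n _ k'])
    finally show ?thesis .
  qed
qed


lemma mat_eqI_mult_vec:
  fixes A B :: "'a::field mat"
  assumes A: "A \<in> carrier_mat n m" and B: "B \<in> carrier_mat n m"
    and h: "\<And>v. v \<in> carrier_vec m \<Longrightarrow> A *\<^sub>v v = B *\<^sub>v v"
  shows "A = B"
proof (rule eq_matI)
  fix i j assume i: "i < dim_row B" and j: "j < dim_col B"
  have "A $$ (i,j) = (A *\<^sub>v unit_vec m j) $ i" using A B i j by auto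
  also have "\<dots> = (B *\<^sub>v unit_vec m j) $ i" using h[of "unit_vec m j"] by simp
  also have "\<dots> = B $$ (i,j)" using B i j by auto
  finally show "A $$ (i,j) = B $$ (i,j)" .
qed (use A B in auto)

text \<open>The last three properties of proj_mat_props characterize the projection matrix, so it
  does not depend on the generator matrix chosen in its definition.\<close>
lemma proj_mat_unique:
  fixes M P1 P2 :: "'a::field mat"
  assumes S: "is_subspace n C" and l: "lcd_wrt n M C" and M: "M \<in> carrier_mat n n"
    and sym: "\<And>u w. u \<in> carrier_vec n \<Longrightarrow> w \<in> carrier_vec n \<Longrightarrow> u \<bullet> (M *\<^sub>v w) = w \<bullet> (M *\<^sub>v u)"
    and P1: "P1 \<in> carrier_mat n n" and P2: "P2 \<in> carrier_mat n n"
    and range1: "\<And>v. v \<in> carrier_vec n \<Longrightarrow> transpose_mat P1 *\<^sub>v v \<in> C"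
    and range2: "\<And>v. v \<in> carrier_vec n \<Longrightarrow> transpose_mat P2 *\<^sub>v v \<in> C"
    and fix1: "\<And>c. c \<in> C \<Longrightarrow> P1 *\<^sub>v (M *\<^sub>v c) = M *\<^sub>v c"
    and fix2: "\<And>c. c \<in> C \<Longrightarrow> P2 *\<^sub>v (M *\<^sub>v c) = M *\<^sub>v c"
  shows "P1 = P2"
proof -
  have Cc: "C \<subseteq> carrier_vec n" using S unfolding is_subspace_def by auto
  have "transpose_mat P1 = transpose_mat P2"
  proof (rule mat_eqI_mult_vec[of _ n n])
    fix v :: "'a vec" assume v: "v \<in> carrier_vec n"
    let ?u1 = "transpose_mat P1 *\<^sub>v v" and ?u2 = "transpose_mat P2 *\<^sub>v v"
    have u1: "?u1 \<in> carrier_vec n" and u2: "?u2 \<in> carrier_vec n" using P1 P2 v by auto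
    have dC: "?u1 - ?u2 \<in> C" using subspace_diff[OF S range1[OF v] range2[OF v]] .
    have "c \<bullet> (M *\<^sub>v (?u1 - ?u2)) = 0" if c: "c \<in> C" for c
    proof -
      have cc: "c \<in> carrier_vec n" and Mc: "M *\<^sub>v c \<in> carrier_vec n" using c Cc M by auto
      have "c \<bullet> (M *\<^sub>v (?u1 - ?u2)) = (?u1 - ?u2) \<bullet> (M *\<^sub>v c)" using sym[OF cc] dC Cc by auto
      also have "\<dots> = ?u1 \<bullet> (M *\<^sub>v c) - ?u2 \<bullet> (M *\<^sub>v c)" by (rule minus_scalar_prod_distrib[OF u1 u2 Mc])
      also have "\<dots> = v \<bullet> (P1 *\<^sub>v (M *\<^sub>v c)) - v \<bullet> (P2 *\<^sub>v (M *\<^sub>v c))"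
        using transpose_vec_mult_scalar[OF P1 Mc v] transpose_vec_mult_scalar[OF P2 Mc v] by simp
      finally show ?thesis using fix1[OF c] fix2[OF c] by simp
    qed
    hence diff0: "?u1 - ?u2 = 0\<^sub>v n" using l dC unfolding lcd_wrt_def by blast
    show "?u1 = ?u2"
    proof (rule eq_vecI)
      fix i assume "i < dim_vec ?u2"
      hence i: "i < n" using P2 by simp
      have "(?u1 - ?u2) $ i = ?u1 $ i - ?u2 $ i" using i P2 by simp
      moreover have "(?u1 - ?u2) $ i = 0" using diff0 i by simp
      ultimately show "?u1 $ i = ?u2 $ i" by simp
    qed (use P1 P2 in simp)
  qed (use P1 P2 in auto)
  thus ?thesis by (metis transpose_transpose)
qed

lemma transpose_congruence_mult_vec:
  fixes A P :: "'a::field mat"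
  assumes A: "A \<in> carrier_mat n n" and P: "P \<in> carrier_mat n n" and v: "v \<in> carrier_vec n"
  shows "transpose_mat (transpose_mat P * A * P) *\<^sub>v v = transpose_mat P *\<^sub>v (transpose_mat A *\<^sub>v (P *\<^sub>v v))"
proof -
  have "transpose_mat (transpose_mat P * A * P) = transpose_mat P * transpose_mat (transpose_mat P * A)"
    by (rule transpose_mult[of _ n n]) (use A P in auto)
  also have "transpose_mat (transpose_mat P * A) = transpose_mat A * P"
    by (subst transpose_mult[of _ n n]) (use A P in auto)
  finally show ?thesis using A P v by (simp add: assoc_mult_mat_vec[of _ n n _ n])
qed

lemma congruence_mult_vec:
  fixes A P :: "'a::field mat"
  assumes "A \<in> carrier_mat n n" and "P \<in> carrier_mat n n" and "v \<in> carrier_vec n"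
  shows "(transpose_mat P * A * P) *\<^sub>v v = transpose_mat P *\<^sub>v (A *\<^sub>v (P *\<^sub>v v))"
  using assms by (simp add: assoc_mult_mat_vec[of _ n n _ n])

lemma proj_mat_perm_act:
  assumes code: "is_code n k C" and l: "lcd_wrt n (gi_mat n a b) C" and s: "\<sigma> permutes {..<n}"
  shows "proj_mat n (gi_mat n a b) (perm_act n \<sigma> ` C)
       = transpose_mat (perm_mat n \<sigma>) * proj_mat n (gi_mat n a b) C * perm_mat n \<sigma>"
proof -
  let ?M = "gi_mat n a b" and ?P = "perm_mat n \<sigma> :: 'a mat" and ?C2 = "perm_act n \<sigma> ` C"
  let ?Pi = "proj_mat n ?M C"
  have Cc: "C \<subseteq> carrier_vec n" by (rule is_code_carrier[OF code])
  have code2: "is_code n k ?C2" by (rule is_code_perm_act[OF code s])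
  have l2: "lcd_wrt n ?M ?C2" by (rule lcd_wrt_gi_mat_perm_act[OF s Cc l])
  note p1 = proj_mat_props[OF code gi_mat_carrier l]
  note p2 = proj_mat_props[OF code2 gi_mat_carrier l2]
  show ?thesis
  proof (rule proj_mat_unique[OF is_code_subspace[OF code2] l2 gi_mat_carrier gi_mat_sym p2(1) _ p2(2) _ p2(4)])
    show "transpose_mat ?P * ?Pi * ?P \<in> carrier_mat n n"
      using p1(1) by (meson mult_carrier_mat perm_mat_carrier transpose_carrier_mat)
    show "transpose_mat (transpose_mat ?P * ?Pi * ?P) *\<^sub>v v \<in> ?C2" if v: "v \<in> carrier_vec n" for v
    proof -
      have "transpose_mat (transpose_mat ?P * ?Pi * ?P) *\<^sub>v v = perm_act n \<sigma> (transpose_mat ?Pi *\<^sub>v (?P *\<^sub>v v))"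
        unfolding perm_act_def by (rule transpose_congruence_mult_vec[OF p1(1) perm_mat_carrier v])
      moreover have "transpose_mat ?Pi *\<^sub>v (?P *\<^sub>v v) \<in> C" by (rule p1(2)) (use v in simp)
      ultimately show ?thesis by auto
    qed
    show "(transpose_mat ?P * ?Pi * ?P) *\<^sub>v (?M *\<^sub>v c) = ?M *\<^sub>v c" if c: "c \<in> ?C2" for c
    proof -
      obtain c1 where c1: "c1 \<in> C" "c = perm_act n \<sigma> c1" using c by auto
      have c1c: "c1 \<in> carrier_vec n" using c1 Cc by auto
      have Mc1: "?M *\<^sub>v c = perm_act n \<sigma> (?M *\<^sub>v c1)" unfolding c1(2) by (rule gi_mat_mult_perm_act[OF s c1c])
      have "(transpose_mat ?P * ?Pi * ?P) *\<^sub>v (?M *\<^sub>v c) = perm_act n \<sigma> (?Pi *\<^sub>v (?P *\<^sub>v (?M *\<^sub>v c)))"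
        unfolding perm_act_def by (rule congruence_mult_vec[OF p1(1) perm_mat_carrier]) (use c1c c1 in auto)
      also have "\<dots> = ?M *\<^sub>v c"
        unfolding Mc1 perm_mat_mult_perm_act[OF s mult_mat_vec_carrier[OF gi_mat_carrier c1c]] p1(4)[OF c1(1)] ..
      finally show ?thesis .
    qed
  qed
qed

lemma proj_mat_range:
  assumes code: "is_code n k C" and M: "M \<in> carrier_mat n n" and l: "lcd_wrt n M C"
  shows "(\<lambda>v. transpose_mat (proj_mat n M C) *\<^sub>v v) ` carrier_vec n = C"
proof
  note p = proj_mat_props[OF code M l]
  show "(\<lambda>v. transpose_mat (proj_mat n M C) *\<^sub>v v) ` carrier_vec n \<subseteq> C" using p(2) by auto
  show "C \<subseteq> (\<lambda>v. transpose_mat (proj_mat n M C) *\<^sub>v v) ` carrier_vec n"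
  proof
    fix c assume c: "c \<in> C"
    hence "c = transpose_mat (proj_mat n M C) *\<^sub>v c" using p(3) by simp
    thus "c \<in> (\<lambda>v. transpose_mat (proj_mat n M C) *\<^sub>v v) ` carrier_vec n"
      using c is_code_carrier[OF code] by auto
  qed
qed


section \<open>GI-reducible codes\<close>

lemma code_mult_iff_proj_mat_congruent:
  assumes code1: "is_code n k C1" and code2: "is_code n k C2"
    and l1: "lcd_wrt n (gi_mat n a b) C1" and l2: "lcd_wrt n (gi_mat n a b) C2"
  shows "(\<exists>P. is_perm_mat n P \<and> C2 = code_mult C1 P) \<longleftrightarrow>
    (\<exists>P'. is_perm_mat n P' \<and>
       proj_mat n (gi_mat n a b) C2 = transpose_mat P' * proj_mat n (gi_mat n a b) C1 * P')"
    (is "?perm \<longleftrightarrow> ?congr")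
proof
  let ?M = "gi_mat n a b"
  assume ?perm
  then obtain \<tau> where t: "\<tau> permutes {..<n}" "C2 = perm_act n \<tau> ` C1"
    unfolding is_perm_mat_def by (auto simp: code_mult_perm_mat)
  have "proj_mat n ?M C2 = transpose_mat (perm_mat n \<tau>) * proj_mat n ?M C1 * perm_mat n \<tau>"
    unfolding t(2) by (rule proj_mat_perm_act[OF code1 l1 t(1)])
  thus ?congr using t(1) unfolding is_perm_mat_def by blast
next
  let ?M = "gi_mat n a b"
  assume ?congr
  then obtain \<tau> where t: "\<tau> permutes {..<n}"
    and e: "proj_mat n ?M C2 = transpose_mat (perm_mat n \<tau>) * proj_mat n ?M C1 * perm_mat n \<tau>"
    unfolding is_perm_mat_def by blast
  let ?Pi = "proj_mat n ?M C1" and ?P = "perm_mat n \<tau> :: 'a mat"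
  have Pi: "?Pi \<in> carrier_mat n n" by (rule proj_mat_props(1)[OF code1 gi_mat_carrier l1])
  have "C2 = (\<lambda>v. transpose_mat (proj_mat n ?M C2) *\<^sub>v v) ` carrier_vec n"
    by (rule proj_mat_range[OF code2 gi_mat_carrier l2, symmetric])
  also have "\<dots> = (\<lambda>v. perm_act n \<tau> (transpose_mat ?Pi *\<^sub>v (?P *\<^sub>v v))) ` carrier_vec n"
    unfolding e perm_act_def by (intro image_cong refl transpose_congruence_mult_vec[OF Pi perm_mat_carrier])
  also have "\<dots> = perm_act n \<tau> ` ((\<lambda>w. transpose_mat ?Pi *\<^sub>v w) ` ((\<lambda>v. ?P *\<^sub>v v) ` carrier_vec n))"
    by (simp add: image_image)
  also have "\<dots> = perm_act n \<tau> ` C1"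
    unfolding perm_mat_image_carrier[OF t] proj_mat_range[OF code1 gi_mat_carrier l1] ..
  finally have "C2 = code_mult C1 ?P" unfolding code_mult_perm_mat .
  thus ?perm using t unfolding is_perm_mat_def by blast
qed

lemma GI_reducible_iff_lcd_wrt_gi_mat:
  assumes code: "is_code n k C"
  shows "GI_reducible n C \<longleftrightarrow> (\<exists>a b. a \<noteq> 0 \<and> a + of_nat n * b \<noteq> 0 \<and> lcd_wrt n (gi_mat n a b) C)"
proof -
  have Cc: "C \<subseteq> carrier_vec n" by (rule is_code_carrier[OF code])
  have "perm_act n id ` C = C" using Cc perm_act_id by (force simp: image_def)
  hence C_in: "C \<in> perm_class n C" unfolding mem_perm_class_iff by (metis permutes_id)
  have class_code: "is_code n k C'" if "C' \<in> perm_class n C" for C'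
    using that is_code_perm_act[OF code] unfolding mem_perm_class_iff by auto
  have class_lcd: "lcd_wrt n (gi_mat n a b) C'"
    if "C' \<in> perm_class n C" "lcd_wrt n (gi_mat n a b) C" for C' a b
    using that lcd_wrt_gi_mat_perm_act[OF _ Cc] unfolding mem_perm_class_iff by auto
  have M_LCD_class: "M_LCD n (gi_mat n a b) C' \<longleftrightarrow> lcd_wrt n (gi_mat n a b) C'"
    if "C' \<in> perm_class n C" for C' a b
    by (rule M_LCD_iff_lcd_wrt[OF class_code[OF that] gi_mat_carrier])
  show ?thesis
  proof
    assume "GI_reducible n C"
    then obtain a b where "a \<noteq> 0" "a + of_nat n * b \<noteq> 0"
      and "\<forall>C'\<in>perm_class n C. M_LCD n (gi_mat n a b) C'"
      unfolding GI_reducible_def Let_def gi_mat_def[symmetric] by blast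
    thus "\<exists>a b. a \<noteq> 0 \<and> a + of_nat n * b \<noteq> 0 \<and> lcd_wrt n (gi_mat n a b) C"
      using C_in M_LCD_class by blast
  next
    assume "\<exists>a b. a \<noteq> 0 \<and> a + of_nat n * b \<noteq> 0 \<and> lcd_wrt n (gi_mat n a b) C"
    then obtain a b where ab: "a \<noteq> 0" "a + of_nat n * b \<noteq> 0" and l: "lcd_wrt n (gi_mat n a b) C"
      by blast
    have "\<forall>C'\<in>perm_class n C. M_LCD n (gi_mat n a b) C'"
      using M_LCD_class class_lcd[OF _ l] by blast
    moreover have "\<forall>C1\<in>perm_class n C. \<forall>C2\<in>perm_class n C.
        (\<exists>P. is_perm_mat n P \<and> C2 = code_mult C1 P) \<longleftrightarrow>
        (\<exists>P'. is_perm_mat n P' \<and>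
           proj_mat n (gi_mat n a b) C2 = transpose_mat P' * proj_mat n (gi_mat n a b) C1 * P')"
      using code_mult_iff_proj_mat_congruent class_code class_lcd[OF _ l] by blast
    ultimately show "GI_reducible n C"
      unfolding GI_reducible_def Let_def gi_mat_def[symmetric] using ab by blast
  qed
qed


definition line :: "'a::field vec \<Rightarrow> 'a vec set" where
  "line x = range (\<lambda>t. t \<cdot>\<^sub>v x)"

definition K_vecs :: "nat \<Rightarrow> 'a::field vec set" where
  "K_vecs n = {x \<in> carrier_vec n. x \<bullet> x = 0 \<and> x \<bullet> all_ones_vec n \<noteq> 0}"

lemma mem_line_self: "x \<in> carrier_vec n \<Longrightarrow> x \<in> line x"
  unfolding line_def by (rule range_eqI[of _ _ 1]) simp

lemma K_vecs_neq_zero: "x \<in> K_vecs n \<Longrightarrow> x \<noteq> 0\<^sub>v n"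
  unfolding K_vecs_def by auto

lemma eq_line_if_functional_inj:
  fixes V :: "'a::field vec set"
  assumes V: "V \<subseteq> carrier_vec n" and u: "u \<in> carrier_vec n"
    and lin: "\<And>y z \<alpha> \<beta>. y \<in> V \<Longrightarrow> z \<in> V \<Longrightarrow> \<alpha> \<cdot>\<^sub>v y + \<beta> \<cdot>\<^sub>v z \<in> V"
    and x: "x \<in> V" and xu: "x \<bullet> u \<noteq> 0"
    and ker: "\<And>y. y \<in> V \<Longrightarrow> y \<bullet> u = 0 \<Longrightarrow> y = 0\<^sub>v n"
  shows "V = line x"
proof
  have xc: "x \<in> carrier_vec n" using x V by auto
  show "line x \<subseteq> V"
  proof
    fix v assume "v \<in> line x"
    then obtain t where "v = t \<cdot>\<^sub>v x" unfolding line_def by auto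
    hence "v = t \<cdot>\<^sub>v x + 0 \<cdot>\<^sub>v x" using xc by (auto simp: vec_eq_iff)
    thus "v \<in> V" using lin[OF x x] by simp
  qed
  show "V \<subseteq> line x"
  proof
    fix y assume y: "y \<in> V"
    have yc: "y \<in> carrier_vec n" using y V by auto
    define z where "z = (y \<bullet> u) \<cdot>\<^sub>v x + (- (x \<bullet> u)) \<cdot>\<^sub>v y"
    have "z \<bullet> u = (y \<bullet> u) * (x \<bullet> u) + (- (x \<bullet> u)) * (y \<bullet> u)"
      unfolding z_def using xc yc u by (simp add: add_scalar_prod_distrib[of _ n])
    hence "z = 0\<^sub>v n" using ker lin[OF x y] unfolding z_def by simp
    hence "y = ((y \<bullet> u) / (x \<bullet> u)) \<cdot>\<^sub>v x"
      using xc yc xu unfolding z_def by (auto simp: vec_eq_iff field_simps)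
    thus "y \<in> line x" unfolding line_def by blast
  qed
qed

lemma scalar_prod_gi_mat_swap:
  assumes "c \<in> carrier_vec n" "c' \<in> carrier_vec n"
  shows "c \<bullet> (gi_mat n a b *\<^sub>v c') = a * (c' \<bullet> c) + b * (c \<bullet> all_ones_vec n) * (c' \<bullet> all_ones_vec n)"
  using scalar_prod_gi_mat[OF assms] comm_scalar_prod[OF assms] by simp

lemma LCD_or_hull_line_if_lcd_wrt_gi_mat:
  assumes code: "is_code n k C" and a: "a \<noteq> 0" and l: "lcd_wrt n (gi_mat n a b) C"
  shows "LCD n C \<or> (\<exists>x\<in>K_vecs n. code_hull n C = line x)"
proof -
  have S: "is_subspace n C" and Cc: "C \<subseteq> carrier_vec n"
    using is_code_subspace[OF code] is_code_carrier[OF code] .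
  have hull: "code_hull n C = {c \<in> C. \<forall>c'\<in>C. c \<bullet> c' = 0}" by (rule code_hull_eq[OF Cc])
  text \<open>On the hull the form aI + bJ reduces to b(y,1)(c,1), so the hull meets the kernel of
    (-,1) trivially.\<close>
  have ker: "y = 0\<^sub>v n" if y: "y \<in> code_hull n C" "y \<bullet> all_ones_vec n = 0" for y
  proof -
    have "y \<in> C" using y code_hull_subset by blast
    moreover have "c \<bullet> (gi_mat n a b *\<^sub>v y) = 0" if c: "c \<in> C" for c
    proof -
      have cc: "c \<in> carrier_vec n" and yc: "y \<in> carrier_vec n" using c \<open>y \<in> C\<close> Cc by auto
      have "y \<bullet> c = 0" using y(1) c unfolding hull by blast
      thus ?thesis using scalar_prod_gi_mat_swap[OF cc yc, of a b] y(2) by simp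
    qed
    ultimately show ?thesis using l unfolding lcd_wrt_def by blast
  qed
  show ?thesis
  proof (cases "code_hull n C = {0\<^sub>v n}")
    case True thus ?thesis unfolding LCD_def by simp
  next
    case False
    then obtain x where x: "x \<in> code_hull n C" "x \<noteq> 0\<^sub>v n" using zero_in_code_hull[OF S] by blast
    have xc: "x \<in> carrier_vec n" using x Cc code_hull_subset by blast
    have x1: "x \<bullet> all_ones_vec n \<noteq> 0" using ker x by blast
    have "x \<bullet> x = 0" using x unfolding hull by blast
    hence "x \<in> K_vecs n" unfolding K_vecs_def using xc x1 by blast
    moreover have "code_hull n C = line x"
      using eq_line_if_functional_inj[OF _ all_ones_vec_carrier code_hull_lin_comb2[OF S] x(1) x1 ker]
        code_hull_subset Cc by blast
    ultimately show ?thesis by blast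
  qed
qed

lemma lcd_wrt_gi_mat_if_LCD:
  assumes code: "is_code n k C" and "LCD n C"
  shows "lcd_wrt n (gi_mat n 1 0) C"
  unfolding lcd_wrt_def
proof (intro ballI impI)
  have Cc: "C \<subseteq> carrier_vec n" by (rule is_code_carrier[OF code])
  fix c' assume c': "c' \<in> C" and orth: "\<forall>c\<in>C. c \<bullet> (gi_mat n 1 0 *\<^sub>v c') = 0"
  have "c' \<bullet> c = 0" if c: "c \<in> C" for c
  proof -
    have "c \<in> carrier_vec n" "c' \<in> carrier_vec n" using c c' Cc by auto
    thus ?thesis using orth c scalar_prod_gi_mat_swap comm_scalar_prod by fastforce
  qed
  hence "c' \<in> code_hull n C" unfolding code_hull_eq[OF Cc] using c' by blast
  thus "c' = 0\<^sub>v n" using assms(2) unfolding LCD_def by blast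
qed

lemma lcd_wrt_gi_mat_if_hull_line:
  assumes code: "is_code n k C" and x: "x \<in> K_vecs n" and h: "code_hull n C = line x"
    and b: "b \<noteq> 0"
  shows "lcd_wrt n (gi_mat n 1 b) C"
  unfolding lcd_wrt_def
proof (intro ballI impI)
  have Cc: "C \<subseteq> carrier_vec n" by (rule is_code_carrier[OF code])
  have x1: "x \<bullet> all_ones_vec n \<noteq> 0" and xc: "x \<in> carrier_vec n" using x unfolding K_vecs_def by auto
  have xh: "x \<in> code_hull n C" unfolding h by (rule mem_line_self[OF xc])
  hence xC: "x \<in> C" and x_orth: "\<forall>c\<in>C. x \<bullet> c = 0" unfolding code_hull_eq[OF Cc] by auto
  fix c' assume c': "c' \<in> C" and orth: "\<forall>c\<in>C. c \<bullet> (gi_mat n 1 b *\<^sub>v c') = 0"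
  have c'c: "c' \<in> carrier_vec n" using c' Cc by auto
  have "b * (x \<bullet> all_ones_vec n) * (c' \<bullet> all_ones_vec n) = 0"
    using orth xC x_orth c' scalar_prod_gi_mat_swap[OF xc c'c, of 1 b] comm_scalar_prod[OF xc c'c] by auto
  hence c'1: "c' \<bullet> all_ones_vec n = 0" using b x1 by simp
  have "c' \<bullet> c = 0" if c: "c \<in> C" for c
  proof -
    have "c \<in> carrier_vec n" using c Cc by auto
    thus ?thesis using orth c c'1 scalar_prod_gi_mat_swap[OF _ c'c] comm_scalar_prod[OF _ c'c] by fastforce
  qed
  hence "c' \<in> code_hull n C" unfolding code_hull_eq[OF Cc] using c' by blast
  then obtain t where t: "c' = t \<cdot>\<^sub>v x" unfolding h line_def by auto
  have "t * (x \<bullet> all_ones_vec n) = 0" using c'1 xc unfolding t by simp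
  hence "t = 0" using x1 by simp
  thus "c' = 0\<^sub>v n" using t xc by auto
qed

lemma GI_reducible_iff:
  fixes C :: "'a::{finite,field} vec set"
  assumes code: "is_code n k C" and odd: "odd (card (UNIV :: 'a set))"
  shows "GI_reducible n C \<longleftrightarrow> LCD n C \<or> (\<exists>x\<in>K_vecs n. code_hull n C = line x)"
proof -
  obtain b :: 'a where b: "b \<noteq> 0" "1 + of_nat n * b \<noteq> 0"
  proof (cases "1 + of_nat n = (0::'a)")
    case True
    hence "1 + of_nat n * (-1) = (2::'a)" by (simp add: algebra_simps eq_neg_iff_add_eq_0)
    thus thesis using that[of "-1"] two_neq_zero_if_odd_card[OF odd] by simp
  next
    case False thus thesis using that[of 1] by simp
  qed
  show ?thesis
    unfolding GI_reducible_iff_lcd_wrt_gi_mat[OF code]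
  proof
    assume "\<exists>a b. a \<noteq> 0 \<and> a + of_nat n * b \<noteq> 0 \<and> lcd_wrt n (gi_mat n a b) C"
    thus "LCD n C \<or> (\<exists>x\<in>K_vecs n. code_hull n C = line x)"
      using LCD_or_hull_line_if_lcd_wrt_gi_mat[OF code] by blast
  next
    assume "LCD n C \<or> (\<exists>x\<in>K_vecs n. code_hull n C = line x)"
    hence "lcd_wrt n (gi_mat n 1 0) C \<or> lcd_wrt n (gi_mat n 1 b) C"
      using lcd_wrt_gi_mat_if_LCD[OF code] lcd_wrt_gi_mat_if_hull_line[OF code _ _ b(1)] by blast
    thus "\<exists>a b. a \<noteq> 0 \<and> a + of_nat n * b \<noteq> 0 \<and> lcd_wrt n (gi_mat n a b) C"
      using b(2) by (metis add_0_right mult_zero_right one_neq_zero)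
  qed
qed

section \<open>Counting codes whose hull is a line\<close>

definition codes_with_hull :: "nat \<Rightarrow> nat \<Rightarrow> 'a::field vec \<Rightarrow> 'a vec set set" where
  "codes_with_hull n k x = {C. is_code n k C \<and> code_hull n C = line x}"

lemma smult_vec_eq_zero_iff:
  fixes x :: "'a::field vec"
  assumes "x \<in> carrier_vec n" and "x \<noteq> 0\<^sub>v n"
  shows "t \<cdot>\<^sub>v x = 0\<^sub>v n \<longleftrightarrow> t = 0"
proof -
  obtain i where "i < n" "x $ i \<noteq> 0" using assms by (auto simp: vec_eq_iff)
  thus ?thesis using assms(1) by (auto simp: vec_eq_iff)
qed

lemma inj_smult_vec:
  fixes x :: "'a::field vec"
  assumes xc: "x \<in> carrier_vec n" and x0: "x \<noteq> 0\<^sub>v n"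
  shows "inj (\<lambda>t. t \<cdot>\<^sub>v x)"
proof (rule injI)
  fix s t :: 'a assume "s \<cdot>\<^sub>v x = t \<cdot>\<^sub>v x"
  hence "(s - t) \<cdot>\<^sub>v x = 0\<^sub>v n" using xc by (auto simp: vec_eq_iff algebra_simps)
  thus "s = t" using smult_vec_eq_zero_iff[OF xc x0] by simp
qed

lemma line_eq_iff:
  assumes x0: "x0 \<in> K_vecs n"
  shows "x \<in> K_vecs n \<and> line x0 = line x \<longleftrightarrow> x \<in> line x0 - {0\<^sub>v n}"
proof
  assume "x \<in> K_vecs n \<and> line x0 = line x"
  thus "x \<in> line x0 - {0\<^sub>v n}" using mem_line_self K_vecs_neq_zero unfolding K_vecs_def by blast
next
  assume "x \<in> line x0 - {0\<^sub>v n}"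
  then obtain t where t: "x = t \<cdot>\<^sub>v x0" "x \<noteq> 0\<^sub>v n" unfolding line_def by auto
  have xc0: "x0 \<in> carrier_vec n" and "x0 \<bullet> x0 = 0" and "x0 \<bullet> all_ones_vec n \<noteq> 0"
    using x0 unfolding K_vecs_def by auto
  moreover have t0: "t \<noteq> 0" using t xc0 by auto
  ultimately have "x \<in> K_vecs n" unfolding K_vecs_def t(1) by simp
  moreover have "line x0 = line x"
  proof
    show "line x \<subseteq> line x0" unfolding line_def t(1) by (auto simp: smult_smult_assoc)
    show "line x0 \<subseteq> line x"
    proof
      fix y assume "y \<in> line x0"
      then obtain s where "y = s \<cdot>\<^sub>v x0" unfolding line_def by auto
      hence "y = (s / t) \<cdot>\<^sub>v x" unfolding t(1) using t0 by (simp add: smult_smult_assoc)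
      thus "y \<in> line x" unfolding line_def by blast
    qed
  qed
  ultimately show "x \<in> K_vecs n \<and> line x0 = line x" by simp
qed

lemma card_line_minus_zero:
  fixes x :: "'a::{finite,field} vec"
  assumes xc: "x \<in> carrier_vec n" and x0: "x \<noteq> 0\<^sub>v n"
  shows "card (line x - {0\<^sub>v n}) = card (UNIV :: 'a set) - 1"
proof -
  have "line x - {0\<^sub>v n} = (\<lambda>t. t \<cdot>\<^sub>v x) ` (UNIV - {0})"
    unfolding line_def using smult_vec_eq_zero_iff[OF xc x0] by auto
  also have "card \<dots> = card (UNIV - {0::'a})"
    using inj_smult_vec[OF xc x0] by (intro card_image) (simp add: inj_on_def inj_def)
  finally show ?thesis by (simp add: card_Diff_singleton)
qed

text \<open>Double counting of the pairs (x, C) with code_hull n C = line x: each such C is counted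
  once for each of the q - 1 nonzero vectors on its hull.\<close>
lemma card_codes_with_line_hull:
  fixes L :: nat
  assumes const: "\<And>x. x \<in> K_vecs n \<Longrightarrow> card (codes_with_hull n k x :: 'a::{finite,field} vec set set) = L"
  shows "(card (UNIV :: 'a set) - 1) * card {C :: 'a vec set. is_code n k C \<and> (\<exists>x\<in>K_vecs n. code_hull n C = line x)}
         = card (K_vecs n :: 'a vec set) * L"
proof -
  let ?K = "K_vecs n :: 'a vec set"
  let ?R = "{C :: 'a vec set. is_code n k C \<and> (\<exists>x\<in>?K. code_hull n C = line x)}"
  let ?T = "\<lambda>C. {x \<in> ?K. code_hull n C = line x}"
  have finK: "finite ?K" using finite_carrier_vec by (rule rev_finite_subset) (auto simp: K_vecs_def)
  have finS: "finite (codes_with_hull n k x)" for x :: "'a vec"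
    using finite_codes[of n k "\<lambda>C. code_hull n C = line x"] unfolding codes_with_hull_def by simp
  have "card (SIGMA x:?K. codes_with_hull n k x) = (\<Sum>x\<in>?K. card (codes_with_hull n k x))"
    using finK finS by (intro card_SigmaI) auto
  also have "\<dots> = card ?K * L" using const by simp
  finally have count_by_x: "card (SIGMA x:?K. codes_with_hull n k x) = card ?K * L" .
  have "(SIGMA x:?K. codes_with_hull n k x) = prod.swap ` (SIGMA C:?R. ?T C)"
    unfolding codes_with_hull_def by (auto simp: image_iff)
  hence "card (SIGMA x:?K. codes_with_hull n k x) = card (SIGMA C:?R. ?T C)" by (simp add: card_image)
  also have "\<dots> = (\<Sum>C\<in>?R. card (?T C))" using finite_codes finK by (intro card_SigmaI) auto
  also have "\<dots> = (\<Sum>C\<in>?R. card (UNIV :: 'a set) - 1)"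
  proof (rule sum.cong)
    fix C assume "C \<in> ?R"
    then obtain x0 where x0: "x0 \<in> ?K" "code_hull n C = line x0" by auto
    have "?T C = line x0 - {0\<^sub>v n}" using line_eq_iff[OF x0(1)] x0(2) by auto
    thus "card (?T C) = card (UNIV :: 'a set) - 1"
      using card_line_minus_zero K_vecs_neq_zero[OF x0(1)] x0(1) unfolding K_vecs_def by auto
  qed simp
  finally show ?thesis using count_by_x by (simp add: mult.commute)
qed


section \<open>Isometries act transitively on isotropic lines\<close>

lemma lin_comb2_scalar_prod:
  fixes u w z :: "'a::field vec"
  assumes "u \<in> carrier_vec n" "w \<in> carrier_vec n" "z \<in> carrier_vec n"
  shows "(a \<cdot>\<^sub>v u + b \<cdot>\<^sub>v w) \<bullet> z = a * (u \<bullet> z) + b * (w \<bullet> z)"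
  using assms by (subst add_scalar_prod_distrib[of _ n]) auto

lemma scalar_prod_lin_comb2:
  fixes u w z :: "'a::field vec"
  assumes "u \<in> carrier_vec n" "w \<in> carrier_vec n" "z \<in> carrier_vec n"
  shows "z \<bullet> (a \<cdot>\<^sub>v u + b \<cdot>\<^sub>v w) = a * (z \<bullet> u) + b * (z \<bullet> w)"
  using assms by (subst scalar_prod_add_distrib[of _ n]) auto

definition reflection_mat :: "nat \<Rightarrow> 'a::field vec \<Rightarrow> 'a mat" where
  "reflection_mat n v = mat n n (\<lambda>(i,j). (if i = j then 1 else 0) - (2 / (v \<bullet> v)) * v $ i * v $ j)"

lemma reflection_mat_carrier[simp]: "reflection_mat n v \<in> carrier_mat n n"
  unfolding reflection_mat_def by simp

lemma reflection_mat_mult_vec_carrier[simp]: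
  "u \<in> carrier_vec n \<Longrightarrow> reflection_mat n v *\<^sub>v u \<in> carrier_vec n"
  by (rule mult_mat_vec_carrier[OF reflection_mat_carrier])

lemma reflection_mat_mult_vec:
  fixes v u :: "'a::field vec"
  assumes v: "v \<in> carrier_vec n" and u: "u \<in> carrier_vec n"
  shows "reflection_mat n v *\<^sub>v u = 1 \<cdot>\<^sub>v u + (- ((2 / (v \<bullet> v)) * (v \<bullet> u))) \<cdot>\<^sub>v v"
proof (rule eq_vecI)
  fix i assume "i < dim_vec (1 \<cdot>\<^sub>v u + (- ((2 / (v \<bullet> v)) * (v \<bullet> u))) \<cdot>\<^sub>v v)"
  hence i: "i < n" using v by simp
  let ?r = "2 / (v \<bullet> v)"
  have "(reflection_mat n v *\<^sub>v u) $ i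
      = (\<Sum>j\<in>{0..<n}. ((if i = j then 1 else 0) - ?r * v $ i * v $ j) * u $ j)"
    using i u unfolding reflection_mat_def by (auto simp: scalar_prod_def intro!: sum.cong)
  also have "\<dots> = (\<Sum>j\<in>{0..<n}. (if j = i then u $ j else 0) - ?r * v $ i * (v $ j * u $ j))"
    by (rule sum.cong) (auto simp: algebra_simps)
  also have "\<dots> = u $ i - ?r * v $ i * (v \<bullet> u)"
    using i u by (simp add: sum_subtractf sum_distrib_left scalar_prod_def)
  finally show "(reflection_mat n v *\<^sub>v u) $ i = (1 \<cdot>\<^sub>v u + (- (?r * (v \<bullet> u))) \<cdot>\<^sub>v v) $ i"
    using i u v by (simp add: algebra_simps)
qed (use v u in \<open>auto simp: reflection_mat_def\<close>)

lemma scalar_prod_reflection_mat_self: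
  fixes v u :: "'a::field vec"
  assumes v: "v \<in> carrier_vec n" and vv: "v \<bullet> v \<noteq> 0" and u: "u \<in> carrier_vec n"
  shows "v \<bullet> (reflection_mat n v *\<^sub>v u) = - (v \<bullet> u)"
  unfolding reflection_mat_mult_vec[OF v u] scalar_prod_lin_comb2[OF u v v] using vv by (simp add: field_simps)

lemma reflection_mat_involution:
  fixes v u :: "'a::field vec"
  assumes v: "v \<in> carrier_vec n" and vv: "v \<bullet> v \<noteq> 0" and u: "u \<in> carrier_vec n"
  shows "reflection_mat n v *\<^sub>v (reflection_mat n v *\<^sub>v u) = u"
  unfolding reflection_mat_mult_vec[OF v mult_mat_vec_carrier[OF reflection_mat_carrier u]]
    scalar_prod_reflection_mat_self[OF v vv u] unfolding reflection_mat_mult_vec[OF v u]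
  using u v by (intro eq_vecI) (auto simp: algebra_simps)

lemma reflection_mat_isometry:
  fixes v u w :: "'a::field vec"
  assumes v: "v \<in> carrier_vec n" and vv: "v \<bullet> v \<noteq> 0" and u: "u \<in> carrier_vec n" and w: "w \<in> carrier_vec n"
  shows "(reflection_mat n v *\<^sub>v u) \<bullet> (reflection_mat n v *\<^sub>v w) = u \<bullet> w"
proof -
  let ?r = "2 / (v \<bullet> v)"
  have Tw: "reflection_mat n v *\<^sub>v w \<in> carrier_vec n" using w by simp
  have "(reflection_mat n v *\<^sub>v u) \<bullet> (reflection_mat n v *\<^sub>v w)
     = 1 * (u \<bullet> (reflection_mat n v *\<^sub>v w)) + (- (?r * (v \<bullet> u))) * (v \<bullet> (reflection_mat n v *\<^sub>v w))"
    unfolding reflection_mat_mult_vec[OF v u] by (rule lin_comb2_scalar_prod[OF u v Tw])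
  also have "u \<bullet> (reflection_mat n v *\<^sub>v w) = 1 * (u \<bullet> w) + (- (?r * (v \<bullet> w))) * (u \<bullet> v)"
    unfolding reflection_mat_mult_vec[OF v w] by (rule scalar_prod_lin_comb2[OF w v u])
  finally show ?thesis
    using comm_scalar_prod[OF u v] scalar_prod_reflection_mat_self[OF v vv w] by (simp add: algebra_simps)
qed

lemma code_hull_image:
  fixes T :: "'a::field mat"
  assumes isom: "\<And>u w. u \<in> carrier_vec n \<Longrightarrow> w \<in> carrier_vec n \<Longrightarrow> (T *\<^sub>v u) \<bullet> (T *\<^sub>v w) = u \<bullet> w"
    and T: "T \<in> carrier_mat n n" and Cc: "C \<subseteq> carrier_vec n"
  shows "code_hull n ((\<lambda>c. T *\<^sub>v c) ` C) = (\<lambda>c. T *\<^sub>v c) ` code_hull n C"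
proof -
  have TCc: "(\<lambda>c. T *\<^sub>v c) ` C \<subseteq> carrier_vec n" using T Cc by auto
  have eq: "(T *\<^sub>v c) \<bullet> (T *\<^sub>v c') = c \<bullet> c'" if "c \<in> C" "c' \<in> C" for c c'
    using isom[OF subsetD[OF Cc that(1)] subsetD[OF Cc that(2)]] .
  have "(\<forall>c'\<in>(\<lambda>c. T *\<^sub>v c) ` C. (T *\<^sub>v c) \<bullet> c' = 0) \<longleftrightarrow> (\<forall>c'\<in>C. c \<bullet> c' = 0)" if "c \<in> C" for c
    using that by (auto simp: eq)
  thus ?thesis unfolding code_hull_eq[OF Cc] code_hull_eq[OF TCc] by auto
qed

lemma card_codes_with_hull_isometry:
  fixes T :: "'a::{finite,field} mat"
  assumes T: "T \<in> carrier_mat n n"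
    and invol: "\<And>u. u \<in> carrier_vec n \<Longrightarrow> T *\<^sub>v (T *\<^sub>v u) = u"
    and isom: "\<And>u w. u \<in> carrier_vec n \<Longrightarrow> w \<in> carrier_vec n \<Longrightarrow> (T *\<^sub>v u) \<bullet> (T *\<^sub>v w) = u \<bullet> w"
    and x: "x \<in> carrier_vec n"
  shows "card (codes_with_hull n k x) = card (codes_with_hull n k (T *\<^sub>v x))"
proof -
  let ?f = "\<lambda>C. (\<lambda>c. T *\<^sub>v c) ` C"
  have inj: "inj_on (\<lambda>v. T *\<^sub>v v) (carrier_vec n)" by (metis inj_onI invol)
  have ff: "?f (?f C) = C" if "C \<subseteq> carrier_vec n" for C
  proof -
    have "?f (?f C) = (\<lambda>c. T *\<^sub>v (T *\<^sub>v c)) ` C" by (simp add: image_image)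
    also have "\<dots> = (\<lambda>c. c) ` C" using that invol by (intro image_cong) auto
    finally show ?thesis by simp
  qed
  have maps: "?f C \<in> codes_with_hull n k (T *\<^sub>v y)"
    if "C \<in> codes_with_hull n k y" "y \<in> carrier_vec n" for C y
  proof -
    have C: "is_code n k C" "code_hull n C = line y" using that(1) unfolding codes_with_hull_def by auto
    have "code_hull n (?f C) = ?f (line y)" using code_hull_image[OF isom T is_code_carrier[OF C(1)]] C(2) by simp
    also have "?f (line y) = line (T *\<^sub>v y)" unfolding line_def image_image using mult_mat_vec[OF T that(2)] by simp
    finally show ?thesis using is_code_image[OF C(1) T inj] unfolding codes_with_hull_def by blast
  qed
  have "bij_betw ?f (codes_with_hull n k x) (codes_with_hull n k (T *\<^sub>v x))"
  proof (rule bij_betw_byWitness[where f' = ?f])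
    have "?f (?f C) = C" if "C \<in> codes_with_hull n k y" for C y
      using that ff[OF is_code_carrier[of n k C]] unfolding codes_with_hull_def by simp
    thus "\<forall>C\<in>codes_with_hull n k x. ?f (?f C) = C" "\<forall>C\<in>codes_with_hull n k (T *\<^sub>v x). ?f (?f C) = C"
      by blast+
    show "?f ` codes_with_hull n k x \<subseteq> codes_with_hull n k (T *\<^sub>v x)" using maps[OF _ x] by auto
    show "?f ` codes_with_hull n k (T *\<^sub>v x) \<subseteq> codes_with_hull n k x"
      using maps[OF _ mult_mat_vec_carrier[OF T x]] invol[OF x] by auto
  qed
  thus ?thesis by (rule bij_betw_same_card)
qed

text \<open>The reflection in x - y swaps two isotropic vectors x, y with (x,y) \<noteq> 0.\<close>
lemma card_codes_with_hull_eq_if_not_orth: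
  fixes x y :: "'a::{finite,field} vec"
  assumes two: "(2::'a) \<noteq> 0" and x: "x \<in> carrier_vec n" and y: "y \<in> carrier_vec n"
    and xx: "x \<bullet> x = 0" and yy: "y \<bullet> y = 0" and xy: "x \<bullet> y \<noteq> 0"
  shows "card (codes_with_hull n k x) = card (codes_with_hull n k y)"
proof -
  define v where "v = 1 \<cdot>\<^sub>v x + (-1) \<cdot>\<^sub>v y"
  have vc: "v \<in> carrier_vec n" unfolding v_def using x y by simp
  have yx: "y \<bullet> x = x \<bullet> y" using comm_scalar_prod[OF y x] .
  have vx: "v \<bullet> x = - (x \<bullet> y)" unfolding v_def lin_comb2_scalar_prod[OF x y x] using xx yx by simp
  have vy: "v \<bullet> y = x \<bullet> y" unfolding v_def lin_comb2_scalar_prod[OF x y y] using yy by simp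
  have "v \<bullet> v = x \<bullet> v - y \<bullet> v"
    using lin_comb2_scalar_prod[OF x y vc, of 1 "-1"] unfolding v_def[symmetric] by simp
  hence vv: "v \<bullet> v = - 2 * (x \<bullet> y)"
    using comm_scalar_prod[OF x vc] comm_scalar_prod[OF y vc] vx vy by simp
  have vv0: "v \<bullet> v \<noteq> 0" unfolding vv using two xy by simp
  have "(2 / (v \<bullet> v)) * (v \<bullet> x) = 1" unfolding vv vx using xy two by (simp add: field_simps)
  hence Tx: "reflection_mat n v *\<^sub>v x = y"
    unfolding reflection_mat_mult_vec[OF vc x] unfolding v_def using x y by (intro eq_vecI) auto
  show ?thesis
    using card_codes_with_hull_isometry[OF reflection_mat_carrier reflection_mat_involution[OF vc vv0]
        reflection_mat_isometry[OF vc vv0] x] unfolding Tx .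
qed


lemma exists_not_orth_both:
  fixes x y :: "'a::field vec"
  assumes x: "x \<in> carrier_vec n" and y: "y \<in> carrier_vec n" and x0: "x \<noteq> 0\<^sub>v n" and y0: "y \<noteq> 0\<^sub>v n"
  obtains w where "w \<in> carrier_vec n" "x \<bullet> w \<noteq> 0" "y \<bullet> w \<noteq> 0"
proof -
  obtain i where i: "i < n" "x $ i \<noteq> 0" using x0 x by (auto simp: vec_eq_iff)
  obtain j where j: "j < n" "y $ j \<noteq> 0" using y0 y by (auto simp: vec_eq_iff)
  have xe: "\<And>l. l < n \<Longrightarrow> x \<bullet> unit_vec n l = x $ l" using x by simp
  have ye: "\<And>l. l < n \<Longrightarrow> y \<bullet> unit_vec n l = y $ l" using y by simp
  consider "y $ i \<noteq> 0" | "x $ j \<noteq> 0" | "y $ i = 0" "x $ j = 0" by blast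
  thus thesis
  proof cases
    case 1 thus thesis using that[of "unit_vec n i"] i xe ye by simp
  next
    case 2 thus thesis using that[of "unit_vec n j"] j xe ye by simp
  next
    case 3
    let ?w = "unit_vec n i + unit_vec n j"
    have "x \<bullet> ?w = x $ i + x $ j" "y \<bullet> ?w = y $ i + y $ j"
      using x y i j by (simp_all add: scalar_prod_add_distrib[of _ n])
    thus thesis using that[of ?w] i j 3 by simp
  qed
qed

text \<open>If x and y are orthogonal, pass through an isotropic z = w + t x that is orthogonal to
  neither of them.\<close>
lemma card_codes_with_hull_eq:
  fixes x y :: "'a::{finite,field} vec"
  assumes two: "(2::'a) \<noteq> 0" and x: "x \<in> carrier_vec n" and y: "y \<in> carrier_vec n"
    and xx: "x \<bullet> x = 0" and yy: "y \<bullet> y = 0" and x0: "x \<noteq> 0\<^sub>v n" and y0: "y \<noteq> 0\<^sub>v n"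
  shows "card (codes_with_hull n k x) = card (codes_with_hull n k y)"
proof (cases "x \<bullet> y = 0")
  case False thus ?thesis using card_codes_with_hull_eq_if_not_orth[OF two x y xx yy] by simp
next
  case True
  have yx: "y \<bullet> x = 0" using comm_scalar_prod[OF y x] True by simp
  obtain w where w: "w \<in> carrier_vec n" "x \<bullet> w \<noteq> 0" "y \<bullet> w \<noteq> 0"
    using exists_not_orth_both[OF x y x0 y0] .
  define t where "t = - (w \<bullet> w) / (2 * (x \<bullet> w))"
  define z where "z = 1 \<cdot>\<^sub>v w + t \<cdot>\<^sub>v x"
  have zc: "z \<in> carrier_vec n" unfolding z_def using w x by simp
  have xz: "x \<bullet> z = x \<bullet> w" unfolding z_def scalar_prod_lin_comb2[OF w(1) x x] using xx by simp
  have yz: "y \<bullet> z = y \<bullet> w" unfolding z_def scalar_prod_lin_comb2[OF w(1) x y] using yx by simp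
  have "z \<bullet> z = w \<bullet> z + t * (x \<bullet> z)"
    using lin_comb2_scalar_prod[OF w(1) x zc, of 1 t] unfolding z_def[symmetric] by simp
  also have "w \<bullet> z = w \<bullet> w + t * (x \<bullet> w)"
    unfolding z_def scalar_prod_lin_comb2[OF w(1) x w(1)] using comm_scalar_prod[OF w(1) x] by simp
  finally have "z \<bullet> z = w \<bullet> w + 2 * t * (x \<bullet> w)" unfolding xz by (simp add: algebra_simps)
  hence zz: "z \<bullet> z = 0" unfolding t_def using w(2) two by (simp add: field_simps)
  have "card (codes_with_hull n k x) = card (codes_with_hull n k z)"
    using card_codes_with_hull_eq_if_not_orth[OF two x zc xx zz] xz w(2) by simp
  also have "\<dots> = card (codes_with_hull n k y)"
    using card_codes_with_hull_eq_if_not_orth[OF two zc y zz yy] comm_scalar_prod[OF zc y] yz w(3) by simp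
  finally show ?thesis .
qed


section \<open>Codes whose hull is spanned by a given isotropic vector\<close>

lemma lin_comb_Suc_shift:
  fixes x0 :: "'a::field vec" and Phi :: "'a mat"
  assumes Phi: "Phi \<in> carrier_mat n m" and g: "\<And>i. i < k \<Longrightarrow> g i \<in> carrier_vec m"
    and x0: "x0 \<in> carrier_vec n"
  shows "lin_comb n (Suc k) (\<lambda>i. if i = 0 then x0 else Phi *\<^sub>v g (i - 1)) y
       = y $ 0 \<cdot>\<^sub>v x0 + Phi *\<^sub>v lin_comb m k g (vec k (\<lambda>i. y $ Suc i))"
proof (rule eq_vecI)
  fix j assume "j < dim_vec (y $ 0 \<cdot>\<^sub>v x0 + Phi *\<^sub>v lin_comb m k g (vec k (\<lambda>i. y $ Suc i)))"
  hence j: "j < n" using Phi by simp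
  have "lin_comb n (Suc k) (\<lambda>i. if i = 0 then x0 else Phi *\<^sub>v g (i - 1)) y $ j
      = (\<Sum>i\<in>{0..<Suc k}. y $ i * (if i = 0 then x0 else Phi *\<^sub>v g (i - 1)) $ j)" using j by simp
  also have "\<dots> = y $ 0 * x0 $ j + (\<Sum>i\<in>{0..<k}. y $ Suc i * (Phi *\<^sub>v g i) $ j)"
    by (subst sum.atLeast0_lessThan_Suc_shift) simp
  also have "\<dots> = (y $ 0 \<cdot>\<^sub>v x0 + lin_comb n k (\<lambda>i. Phi *\<^sub>v g i) (vec k (\<lambda>i. y $ Suc i))) $ j"
    using j x0 by simp
  also have "\<dots> = (y $ 0 \<cdot>\<^sub>v x0 + Phi *\<^sub>v lin_comb m k g (vec k (\<lambda>i. y $ Suc i))) $ j"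
    using mult_mat_vec_lin_comb[OF Phi g, where y = "vec k (\<lambda>i. y $ Suc i)"] by simp
  finally show "lin_comb n (Suc k) (\<lambda>i. if i = 0 then x0 else Phi *\<^sub>v g (i - 1)) y $ j
      = (y $ 0 \<cdot>\<^sub>v x0 + Phi *\<^sub>v lin_comb m k g (vec k (\<lambda>i. y $ Suc i))) $ j" .
qed (use Phi in simp)

definition skip_index :: "nat \<Rightarrow> nat \<Rightarrow> nat" where
  "skip_index i0 j = (if j < i0 then j else Suc j)"

definition insert_zero :: "nat \<Rightarrow> nat \<Rightarrow> 'a::zero vec \<Rightarrow> 'a vec" where
  "insert_zero k i0 z = vec (Suc k) (\<lambda>i. if i < i0 then z $ i else if i = i0 then 0 else z $ (i - 1))"

lemma skip_index_image: "i0 < Suc k \<Longrightarrow> skip_index i0 ` {0..<k} = {0..<Suc k} - {i0}"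
proof
  assume i0: "i0 < Suc k"
  show "{0..<Suc k} - {i0} \<subseteq> skip_index i0 ` {0..<k}"
  proof
    fix i assume i: "i \<in> {0..<Suc k} - {i0}"
    show "i \<in> skip_index i0 ` {0..<k}"
    proof (cases "i < i0")
      case True thus ?thesis using i i0 unfolding skip_index_def by (intro image_eqI[of _ _ i]) auto
    next
      case False thus ?thesis using i unfolding skip_index_def by (intro image_eqI[of _ _ "i - 1"]) auto
    qed
  qed
qed (auto simp: skip_index_def)

lemma sum_skip_index:
  fixes f :: "nat \<Rightarrow> 'b::comm_monoid_add"
  assumes i0: "i0 < Suc k" and f0: "f i0 = 0"
  shows "(\<Sum>i\<in>{0..<Suc k}. f i) = (\<Sum>j\<in>{0..<k}. f (skip_index i0 j))"
proof -
  have "(\<Sum>i\<in>{0..<Suc k}. f i) = f i0 + (\<Sum>i\<in>{0..<Suc k} - {i0}. f i)"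
    using i0 by (intro sum.remove) auto
  also have "\<dots> = (\<Sum>i\<in>skip_index i0 ` {0..<k}. f i)" unfolding skip_index_image[OF i0] f0 by simp
  also have "\<dots> = (\<Sum>j\<in>{0..<k}. f (skip_index i0 j))"
    using sum.reindex[of "skip_index i0" "{0..<k}" f] by (simp add: inj_on_def skip_index_def comp_def)
  finally show ?thesis .
qed

lemma insert_zero_carrier[simp]: "insert_zero k i0 z \<in> carrier_vec (Suc k)"
  unfolding insert_zero_def by simp

lemma insert_zero_at: "i0 < Suc k \<Longrightarrow> insert_zero k i0 z $ i0 = 0"
  unfolding insert_zero_def by simp

lemma insert_zero_skip_index: "j < k \<Longrightarrow> insert_zero k i0 z $ skip_index i0 j = z $ j"
  unfolding insert_zero_def skip_index_def by auto

lemma lin_comb_insert_zero: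
  fixes z :: "'a::field vec"
  assumes i0: "i0 < Suc k"
  shows "lin_comb n (Suc k) g (insert_zero k i0 z) = lin_comb n k (\<lambda>j. g (skip_index i0 j)) z"
proof (rule eq_vecI)
  fix l assume "l < dim_vec (lin_comb n k (\<lambda>j. g (skip_index i0 j)) z)"
  hence l: "l < n" by simp
  have "lin_comb n (Suc k) g (insert_zero k i0 z) $ l
      = (\<Sum>i\<in>{0..<Suc k}. insert_zero k i0 z $ i * g i $ l)" using l by simp
  also have "\<dots> = (\<Sum>j\<in>{0..<k}. insert_zero k i0 z $ skip_index i0 j * g (skip_index i0 j) $ l)"
    by (rule sum_skip_index[OF i0]) (simp add: insert_zero_at[OF i0])
  also have "\<dots> = (\<Sum>j\<in>{0..<k}. z $ j * g (skip_index i0 j) $ l)"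
    by (rule sum.cong) (auto simp: insert_zero_skip_index)
  finally show "lin_comb n (Suc k) g (insert_zero k i0 z) $ l = lin_comb n k (\<lambda>j. g (skip_index i0 j)) z $ l"
    using l by simp
qed simp

lemma insert_zero_skip_index_vec:
  fixes y :: "'a::field vec"
  assumes i0: "i0 < Suc k" and y: "y \<in> carrier_vec (Suc k)" and y0: "y $ i0 = 0"
  shows "insert_zero k i0 (vec k (\<lambda>j. y $ skip_index i0 j)) = y"
proof (rule eq_vecI)
  fix i assume "i < dim_vec y"
  thus "insert_zero k i0 (vec k (\<lambda>j. y $ skip_index i0 j)) $ i = y $ i"
    using y i0 y0 unfolding insert_zero_def skip_index_def by auto
qed (use y in \<open>simp add: insert_zero_def\<close>)

lemma insert_zero_inj:
  fixes z z' :: "'a::field vec"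
  assumes "z \<in> carrier_vec k" "z' \<in> carrier_vec k" "insert_zero k i0 z = insert_zero k i0 z'"
  shows "z = z'"
proof (rule eq_vecI)
  fix j assume "j < dim_vec z'"
  hence j: "j < k" using assms by simp
  show "z $ j = z' $ j"
    using arg_cong[OF assms(3), of "\<lambda>v. v $ skip_index i0 j"]
    unfolding insert_zero_skip_index[OF j] .
qed (use assms in simp)


text \<open>An explicit model of x0^\<bottom>/\<langle>x0\<rangle>: Phi embeds F^m with the form B isometrically into
  x0^\<bottom> as a complement of x0, Psi is the projection back along x0, and p is a coordinate at
  which x0 does not vanish while every vector Phi d does.\<close>
locale isotropic_reduction =
  fixes n m :: nat and x0 :: "'a::field vec" and Phi Psi B :: "'a mat" and p :: nat
  assumes x0_carrier: "x0 \<in> carrier_vec n" and p_lt: "p < n" and x0_p: "x0 $ p \<noteq> 0"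
    and x0_isotropic: "x0 \<bullet> x0 = 0"
    and Phi_carrier: "Phi \<in> carrier_mat n m" and Psi_carrier: "Psi \<in> carrier_mat m n"
    and Psi_Phi: "\<And>d. d \<in> carrier_vec m \<Longrightarrow> Psi *\<^sub>v (Phi *\<^sub>v d) = d"
    and Psi_x0: "Psi *\<^sub>v x0 = 0\<^sub>v m"
    and Phi_p: "\<And>d. d \<in> carrier_vec m \<Longrightarrow> (Phi *\<^sub>v d) $ p = 0"
    and x0_orth_Phi: "\<And>d. d \<in> carrier_vec m \<Longrightarrow> x0 \<bullet> (Phi *\<^sub>v d) = 0"
    and Phi_isometry: "\<And>d d'. d \<in> carrier_vec m \<Longrightarrow> d' \<in> carrier_vec m \<Longrightarrow>
          (Phi *\<^sub>v d) \<bullet> (Phi *\<^sub>v d') = d \<bullet> (B *\<^sub>v d')"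
    and orth_x0_decomp: "\<And>z. z \<in> carrier_vec n \<Longrightarrow> z \<bullet> x0 = 0 \<Longrightarrow>
          z = (z $ p / x0 $ p) \<cdot>\<^sub>v x0 + Phi *\<^sub>v (Psi *\<^sub>v z)"
begin

definition lift :: "'a vec set \<Rightarrow> 'a vec set" where
  "lift D = {t \<cdot>\<^sub>v x0 + Phi *\<^sub>v d | t d. d \<in> D}"

definition reduce :: "'a vec set \<Rightarrow> 'a vec set" where
  "reduce C = {d \<in> carrier_vec m. Phi *\<^sub>v d \<in> C}"

lemma Phi_mult_carrier[simp]: "d \<in> carrier_vec m \<Longrightarrow> Phi *\<^sub>v d \<in> carrier_vec n"
  using Phi_carrier by simp

lemma Psi_mult_carrier[simp]: "z \<in> carrier_vec n \<Longrightarrow> Psi *\<^sub>v z \<in> carrier_vec m"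
  using Psi_carrier by simp

lemma lift_vec_p: "d \<in> carrier_vec m \<Longrightarrow> (t \<cdot>\<^sub>v x0 + Phi *\<^sub>v d) $ p = t * x0 $ p"
  using Phi_p[of d] x0_carrier p_lt Phi_carrier by simp

lemma Psi_lift_vec:
  assumes d: "d \<in> carrier_vec m"
  shows "Psi *\<^sub>v (t \<cdot>\<^sub>v x0 + Phi *\<^sub>v d) = d"
proof -
  have "Psi *\<^sub>v (t \<cdot>\<^sub>v x0 + Phi *\<^sub>v d) = t \<cdot>\<^sub>v (Psi *\<^sub>v x0) + Psi *\<^sub>v (Phi *\<^sub>v d)"
    using d x0_carrier by (simp add: mult_add_distrib_mat_vec[OF Psi_carrier] mult_mat_vec[OF Psi_carrier])
  also have "\<dots> = d" unfolding Psi_x0 Psi_Phi[OF d] using d by (intro eq_vecI) auto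
  finally show ?thesis .
qed

lemma Phi_eq_lift_vec: "d \<in> carrier_vec m \<Longrightarrow> Phi *\<^sub>v d = 0 \<cdot>\<^sub>v x0 + Phi *\<^sub>v d"
  using x0_carrier Phi_carrier by (intro eq_vecI) auto

lemma lift_carrier: "D \<subseteq> carrier_vec m \<Longrightarrow> lift D \<subseteq> carrier_vec n"
  unfolding lift_def using x0_carrier by auto

lemma reduce_lift:
  assumes D: "D \<subseteq> carrier_vec m"
  shows "reduce (lift D) = D"
proof
  show "reduce (lift D) \<subseteq> D"
  proof
    fix d' assume "d' \<in> reduce (lift D)"
    then obtain t d where d': "d' \<in> carrier_vec m" and d: "d \<in> D"
      and e: "Phi *\<^sub>v d' = t \<cdot>\<^sub>v x0 + Phi *\<^sub>v d"
      unfolding reduce_def lift_def by auto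
    have "d' = d" using arg_cong[OF e, of "\<lambda>v. Psi *\<^sub>v v"] Psi_Phi[OF d'] Psi_lift_vec d D by auto
    thus "d' \<in> D" using d by simp
  qed
  show "D \<subseteq> reduce (lift D)"
    unfolding reduce_def lift_def using D Phi_eq_lift_vec by blast
qed

lemma code_basis_lift:
  assumes basis: "code_basis m k g D"
  shows "code_basis n (Suc k) (\<lambda>i. if i = 0 then x0 else Phi *\<^sub>v g (i - 1)) (lift D)"
proof -
  have g: "\<And>i. i < k \<Longrightarrow> g i \<in> carrier_vec m" and inj: "inj_on (lin_comb m k g) (carrier_vec k)"
    and D: "D = lin_comb m k g ` carrier_vec k" using basis unfolding code_basis_def by auto
  let ?g' = "\<lambda>i. if i = 0 then x0 else Phi *\<^sub>v g (i - 1)" and ?tl = "\<lambda>y. vec k (\<lambda>i. y $ Suc i)"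
  have lin: "lin_comb n (Suc k) ?g' y = y $ 0 \<cdot>\<^sub>v x0 + Phi *\<^sub>v lin_comb m k g (?tl y)" for y
    by (rule lin_comb_Suc_shift[OF Phi_carrier g x0_carrier])
  have "inj_on (lin_comb n (Suc k) ?g') (carrier_vec (Suc k))"
  proof (rule inj_onI)
    fix y y' :: "'a vec" assume y: "y \<in> carrier_vec (Suc k)" and y': "y' \<in> carrier_vec (Suc k)"
      and e: "lin_comb n (Suc k) ?g' y = lin_comb n (Suc k) ?g' y'"
    have "y $ 0 * x0 $ p = y' $ 0 * x0 $ p"
      using arg_cong[OF e, of "\<lambda>v. v $ p"] unfolding lin by (simp add: lift_vec_p)
    hence head: "y $ 0 = y' $ 0" using x0_p by simp
    have "lin_comb m k g (?tl y) = lin_comb m k g (?tl y')"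
      using arg_cong[OF e, of "\<lambda>v. Psi *\<^sub>v v"] unfolding lin by (simp add: Psi_lift_vec)
    hence "?tl y = ?tl y'" using inj unfolding inj_on_def by simp
    hence "y $ Suc i = y' $ Suc i" if "i < k" for i using that by (metis index_vec)
    with head show "y = y'" using y y' by (intro eq_vecI) (auto simp: less_Suc_eq_0_disj)
  qed
  moreover have "lift D = lin_comb n (Suc k) ?g' ` carrier_vec (Suc k)"
  proof
    show "lift D \<subseteq> lin_comb n (Suc k) ?g' ` carrier_vec (Suc k)"
    proof
      fix v assume "v \<in> lift D"
      then obtain t z where v: "v = t \<cdot>\<^sub>v x0 + Phi *\<^sub>v lin_comb m k g z" and z: "z \<in> carrier_vec k"
        unfolding lift_def D by auto
      define y where "y = vec (Suc k) (\<lambda>i. if i = 0 then t else z $ (i - 1))"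
      have "?tl y = z" unfolding y_def using z by (intro eq_vecI) auto
      hence "lin_comb n (Suc k) ?g' y = v" unfolding lin v y_def by simp
      thus "v \<in> lin_comb n (Suc k) ?g' ` carrier_vec (Suc k)" unfolding y_def by force
    qed
    show "lin_comb n (Suc k) ?g' ` carrier_vec (Suc k) \<subseteq> lift D"
      unfolding lift_def D lin by fastforce
  qed
  moreover have "\<forall>i<Suc k. ?g' i \<in> carrier_vec n" using g x0_carrier by auto
  ultimately show ?thesis unfolding code_basis_def by blast
qed

lemma code_hull_lift:
  assumes S: "is_subspace m D" and l: "lcd_wrt m B D"
  shows "code_hull n (lift D) = line x0"
proof
  have Dc: "D \<subseteq> carrier_vec m" using S unfolding is_subspace_def by auto
  note hull = code_hull_eq[OF lift_carrier[OF Dc]]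
  show "line x0 \<subseteq> code_hull n (lift D)"
  proof
    fix v assume "v \<in> line x0"
    then obtain t where v: "v = t \<cdot>\<^sub>v x0" unfolding line_def by auto
    have "v = t \<cdot>\<^sub>v x0 + Phi *\<^sub>v 0\<^sub>v m" unfolding v using x0_carrier Phi_carrier by (intro eq_vecI) auto
    moreover have "0\<^sub>v m \<in> D" using S unfolding is_subspace_def by auto
    ultimately have "v \<in> lift D" unfolding lift_def by blast
    moreover have "v \<bullet> (s \<cdot>\<^sub>v x0 + Phi *\<^sub>v d) = 0" if "d \<in> D" for s d
      using that Dc x0_carrier x0_isotropic x0_orth_Phi unfolding v
      by (subst scalar_prod_add_distrib[of _ n]) auto
    ultimately show "v \<in> code_hull n (lift D)" unfolding hull unfolding lift_def by blast
  qed
  show "code_hull n (lift D) \<subseteq> line x0"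
  proof
    fix v assume vh: "v \<in> code_hull n (lift D)"
    then obtain t d where v: "v = t \<cdot>\<^sub>v x0 + Phi *\<^sub>v d" and d: "d \<in> D"
      unfolding hull unfolding lift_def by auto
    have dc: "d \<in> carrier_vec m" using d Dc by auto
    have "d' \<bullet> (B *\<^sub>v d) = 0" if d': "d' \<in> D" for d'
    proof -
      have d'c: "d' \<in> carrier_vec m" using d' Dc by auto
      have "Phi *\<^sub>v d' \<in> lift D" unfolding lift_def using d' d'c Phi_eq_lift_vec by blast
      hence "v \<bullet> (Phi *\<^sub>v d') = 0" using vh unfolding hull by blast
      moreover have "v \<bullet> (Phi *\<^sub>v d') = (Phi *\<^sub>v d) \<bullet> (Phi *\<^sub>v d')"
        unfolding v using x0_carrier dc d'c x0_orth_Phi[OF d'c] by (subst add_scalar_prod_distrib[of _ n]) auto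
      ultimately show ?thesis
        using Phi_isometry[OF d'c dc] comm_scalar_prod[OF Phi_mult_carrier[OF dc] Phi_mult_carrier[OF d'c]] by simp
    qed
    hence "d = 0\<^sub>v m" using l d unfolding lcd_wrt_def by blast
    hence "v = t \<cdot>\<^sub>v x0" unfolding v using x0_carrier Phi_carrier by (intro eq_vecI) auto
    thus "v \<in> line x0" unfolding line_def by blast
  qed
qed

lemma lift_mem_codes_with_hull:
  assumes "is_code m k D" and "lcd_wrt m B D"
  shows "lift D \<in> codes_with_hull n (Suc k) x0"
proof -
  obtain g where "code_basis m k g D" using assms(1) unfolding is_code_iff_code_basis by blast
  hence "is_code n (Suc k) (lift D)" unfolding is_code_iff_code_basis by (blast intro: code_basis_lift)
  thus ?thesis using code_hull_lift[OF is_code_subspace[OF assms(1)] assms(2)]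
    unfolding codes_with_hull_def by simp
qed

context
  fixes C :: "'a vec set"
  assumes C_subspace: "is_subspace n C" and x0_hull: "x0 \<in> code_hull n C"
begin

lemma C_carrier: "C \<subseteq> carrier_vec n"
  using C_subspace unfolding is_subspace_def by auto

lemma x0_mem: "x0 \<in> C"
  using x0_hull code_hull_subset by blast

lemma decomp_mem:
  assumes c: "c \<in> C"
  shows "c = (c $ p / x0 $ p) \<cdot>\<^sub>v x0 + Phi *\<^sub>v (Psi *\<^sub>v c)"
proof -
  have cc: "c \<in> carrier_vec n" using c C_carrier by auto
  have "c \<bullet> x0 = 0"
    using x0_hull c comm_scalar_prod[OF cc x0_carrier] unfolding code_hull_eq[OF C_carrier] by auto
  thus ?thesis using orth_x0_decomp[OF cc] by simp
qed

lemma Psi_mem_reduce: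
  assumes c: "c \<in> C"
  shows "Psi *\<^sub>v c \<in> reduce C"
proof -
  let ?s = "c $ p / x0 $ p"
  have cc: "c \<in> carrier_vec n" using c C_carrier by auto
  have "Phi *\<^sub>v (Psi *\<^sub>v c) = 1 \<cdot>\<^sub>v c + (- ?s) \<cdot>\<^sub>v x0"
  proof (rule eq_vecI)
    fix i assume "i < dim_vec (1 \<cdot>\<^sub>v c + (- ?s) \<cdot>\<^sub>v x0)"
    hence i: "i < n" using x0_carrier by simp
    have "c $ i = (?s \<cdot>\<^sub>v x0 + Phi *\<^sub>v (Psi *\<^sub>v c)) $ i" using decomp_mem[OF c] by simp
    thus "(Phi *\<^sub>v (Psi *\<^sub>v c)) $ i = (1 \<cdot>\<^sub>v c + (- ?s) \<cdot>\<^sub>v x0) $ i"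
      using i cc x0_carrier Phi_carrier by simp
  qed (use cc x0_carrier Phi_carrier in simp)
  hence "Phi *\<^sub>v (Psi *\<^sub>v c) \<in> C" using subspace_lin_comb2[OF C_subspace c x0_mem, of 1 "- ?s"] by simp
  thus ?thesis unfolding reduce_def using cc by simp
qed

lemma lift_reduce: "lift (reduce C) = C"
proof
  show "lift (reduce C) \<subseteq> C"
  proof
    fix v assume "v \<in> lift (reduce C)"
    then obtain t d where v: "v = t \<cdot>\<^sub>v x0 + Phi *\<^sub>v d" and "Phi *\<^sub>v d \<in> C" "d \<in> carrier_vec m"
      unfolding lift_def reduce_def by auto
    thus "v \<in> C" using subspace_lin_comb2[OF C_subspace x0_mem, of "Phi *\<^sub>v d" t 1] by simp
  qed
  show "C \<subseteq> lift (reduce C)"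
  proof
    fix c assume c: "c \<in> C"
    show "c \<in> lift (reduce C)" unfolding lift_def
      by (rule CollectI, rule exI[of _ "c $ p / x0 $ p"], rule exI[of _ "Psi *\<^sub>v c"])
        (use decomp_mem[OF c] Psi_mem_reduce[OF c] in simp)
  qed
qed

end

lemma lcd_wrt_reduce:
  assumes S: "is_subspace n C" and h: "code_hull n C = line x0"
  shows "lcd_wrt m B (reduce C)"
  unfolding lcd_wrt_def
proof (intro ballI impI)
  have x0h: "x0 \<in> code_hull n C" unfolding h by (rule mem_line_self[OF x0_carrier])
  have Cc: "C \<subseteq> carrier_vec n" using S unfolding is_subspace_def by auto
  fix d' assume d': "d' \<in> reduce C" and orth: "\<forall>d\<in>reduce C. d \<bullet> (B *\<^sub>v d') = 0"
  have d'c: "d' \<in> carrier_vec m" and d'C: "Phi *\<^sub>v d' \<in> C" using d' unfolding reduce_def by auto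
  have "(Phi *\<^sub>v d') \<bullet> c = 0" if c: "c \<in> C" for c
  proof -
    let ?s = "c $ p / x0 $ p" and ?w = "Phi *\<^sub>v (Psi *\<^sub>v c)"
    have cc: "c \<in> carrier_vec n" using c Cc by auto
    have "c \<bullet> (Phi *\<^sub>v d') = (?s \<cdot>\<^sub>v x0 + ?w) \<bullet> (Phi *\<^sub>v d')"
      using decomp_mem[OF S x0h c] by (rule arg_cong)
    also have "\<dots> = ?w \<bullet> (Phi *\<^sub>v d')"
      using x0_carrier cc d'c x0_orth_Phi[OF d'c] by (subst add_scalar_prod_distrib[of _ n]) auto
    also have "\<dots> = 0"
      using Phi_isometry[OF _ d'c, of "Psi *\<^sub>v c"] orth Psi_mem_reduce[OF S x0h c] cc by simp
    finally show ?thesis using comm_scalar_prod[OF cc Phi_mult_carrier[OF d'c]] by simp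
  qed
  hence "Phi *\<^sub>v d' \<in> code_hull n C" using d'C unfolding code_hull_eq[OF Cc] by blast
  then obtain t where t: "Phi *\<^sub>v d' = t \<cdot>\<^sub>v x0" unfolding h line_def by auto
  have "t * x0 $ p = 0" using arg_cong[OF t, of "\<lambda>v. v $ p"] Phi_p[OF d'c] x0_carrier p_lt by simp
  hence "t = 0" using x0_p by simp
  hence "Phi *\<^sub>v d' = 0 \<cdot>\<^sub>v x0 + Phi *\<^sub>v 0\<^sub>v m"
    using t x0_carrier Phi_carrier by (intro eq_vecI) auto
  hence "Psi *\<^sub>v (Phi *\<^sub>v d') = 0\<^sub>v m" using Psi_lift_vec[of "0\<^sub>v m" 0] by simp
  thus "d' = 0\<^sub>v m" using Psi_Phi[OF d'c] by simp
qed

context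
  fixes C :: "'a vec set" and k :: nat and g :: "nat \<Rightarrow> 'a vec" and y0 :: "'a vec" and i0 :: nat
  assumes basis: "code_basis n (Suc k) g C" and x0_in_hull: "x0 \<in> code_hull n C"
    and y0: "y0 \<in> carrier_vec (Suc k)" and x0_eq: "x0 = lin_comb n (Suc k) g y0"
    and i0: "i0 < Suc k" and y0_i0: "y0 $ i0 \<noteq> 0"
begin

lemma basis_carrier: "i < Suc k \<Longrightarrow> g i \<in> carrier_vec n"
  using basis unfolding code_basis_def by auto

lemma basis_inj: "inj_on (lin_comb n (Suc k) g) (carrier_vec (Suc k))"
  using basis unfolding code_basis_def by auto

lemma basis_image: "C = lin_comb n (Suc k) g ` carrier_vec (Suc k)"
  using basis unfolding code_basis_def by auto

lemma basis_lin_comb2: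
  "y \<in> carrier_vec (Suc k) \<Longrightarrow> y' \<in> carrier_vec (Suc k) \<Longrightarrow>
   lin_comb n (Suc k) g (1 \<cdot>\<^sub>v y + a \<cdot>\<^sub>v y') = 1 \<cdot>\<^sub>v lin_comb n (Suc k) g y + a \<cdot>\<^sub>v lin_comb n (Suc k) g y'"
  by (simp add: lin_comb_add lin_comb_smult)

lemma lin_comb_reduced_basis:
  "lin_comb m k (\<lambda>j. Psi *\<^sub>v g (skip_index i0 j)) z = Psi *\<^sub>v lin_comb n (Suc k) g (insert_zero k i0 z)"
  unfolding lin_comb_insert_zero[OF i0]
  by (rule mult_mat_vec_lin_comb[OF Psi_carrier, symmetric]) (auto simp: skip_index_def basis_carrier)

text \<open>Subtracting a multiple of y0 kills the coordinate i0 without changing Psi of the codeword,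
  since Psi x0 = 0.\<close>
lemma reduce_eq_image: "reduce C = lin_comb m k (\<lambda>j. Psi *\<^sub>v g (skip_index i0 j)) ` carrier_vec k"
proof
  have S: "is_subspace n C" by (rule code_basis_subspace[OF basis])
  show "lin_comb m k (\<lambda>j. Psi *\<^sub>v g (skip_index i0 j)) ` carrier_vec k \<subseteq> reduce C"
    unfolding lin_comb_reduced_basis using Psi_mem_reduce[OF S x0_in_hull] basis_image by auto
  show "reduce C \<subseteq> lin_comb m k (\<lambda>j. Psi *\<^sub>v g (skip_index i0 j)) ` carrier_vec k"
  proof
    fix d assume "d \<in> reduce C"
    hence dc: "d \<in> carrier_vec m" and "Phi *\<^sub>v d \<in> C" unfolding reduce_def by auto
    then obtain y where y: "y \<in> carrier_vec (Suc k)" "Phi *\<^sub>v d = lin_comb n (Suc k) g y"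
      using basis_image by auto
    define s where "s = y $ i0 / y0 $ i0"
    define y' where "y' = 1 \<cdot>\<^sub>v y + (- s) \<cdot>\<^sub>v y0"
    have y'c: "y' \<in> carrier_vec (Suc k)" unfolding y'_def using y y0 by simp
    have y'0: "y' $ i0 = 0" unfolding y'_def s_def using y y0 i0 y0_i0 by simp
    have "lin_comb n (Suc k) g y' = 1 \<cdot>\<^sub>v (Phi *\<^sub>v d) + (- s) \<cdot>\<^sub>v x0"
      unfolding y'_def basis_lin_comb2[OF y(1) y0] y(2) x0_eq ..
    hence "Psi *\<^sub>v lin_comb n (Suc k) g y' = 1 \<cdot>\<^sub>v (Psi *\<^sub>v (Phi *\<^sub>v d)) + (- s) \<cdot>\<^sub>v (Psi *\<^sub>v x0)"
      using dc x0_carrier by (simp add: mult_add_distrib_mat_vec[OF Psi_carrier] mult_mat_vec[OF Psi_carrier])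
    also have "\<dots> = d" unfolding Psi_Phi[OF dc] Psi_x0 using dc by (intro eq_vecI) auto
    finally have "Psi *\<^sub>v lin_comb n (Suc k) g y' = d" .
    moreover have "insert_zero k i0 (vec k (\<lambda>j. y' $ skip_index i0 j)) = y'"
      by (rule insert_zero_skip_index_vec[OF i0 y'c y'0])
    ultimately have "lin_comb m k (\<lambda>j. Psi *\<^sub>v g (skip_index i0 j)) (vec k (\<lambda>j. y' $ skip_index i0 j)) = d"
      unfolding lin_comb_reduced_basis by simp
    thus "d \<in> lin_comb m k (\<lambda>j. Psi *\<^sub>v g (skip_index i0 j)) ` carrier_vec k"
      by (metis image_eqI vec_carrier)
  qed
qed

text \<open>Two codewords with equal image under Psi differ by a multiple of x0 = g(y0); comparing the
  coordinates i0 of their coefficient vectors shows that the multiple is zero.\<close>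
lemma inj_on_reduced_basis: "inj_on (lin_comb m k (\<lambda>j. Psi *\<^sub>v g (skip_index i0 j))) (carrier_vec k)"
proof (rule inj_onI)
  have S: "is_subspace n C" by (rule code_basis_subspace[OF basis])
  fix z z' :: "'a vec" assume z: "z \<in> carrier_vec k" and z': "z' \<in> carrier_vec k"
    and e: "lin_comb m k (\<lambda>j. Psi *\<^sub>v g (skip_index i0 j)) z = lin_comb m k (\<lambda>j. Psi *\<^sub>v g (skip_index i0 j)) z'"
  let ?u = "insert_zero k i0 z" and ?u' = "insert_zero k i0 z'"
  let ?c = "lin_comb n (Suc k) g ?u" and ?c' = "lin_comb n (Suc k) g ?u'"
  define w where "w = Phi *\<^sub>v (Psi *\<^sub>v ?c)"
  have wc: "w \<in> carrier_vec n" unfolding w_def by simp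
  have "Psi *\<^sub>v ?c = Psi *\<^sub>v ?c'" using e unfolding lin_comb_reduced_basis .
  moreover have "?c \<in> C" "?c' \<in> C" using basis_image by auto
  ultimately obtain s s' where ec: "?c = s \<cdot>\<^sub>v x0 + w" and ec': "?c' = s' \<cdot>\<^sub>v x0 + w"
    using decomp_mem[OF S x0_in_hull] unfolding w_def by metis
  have cancel: "1 \<cdot>\<^sub>v (a \<cdot>\<^sub>v x0 + w) + (- a) \<cdot>\<^sub>v x0 = w" for a
    using x0_carrier wc by (intro eq_vecI) auto
  have "lin_comb n (Suc k) g (1 \<cdot>\<^sub>v ?u + (- s) \<cdot>\<^sub>v y0) = lin_comb n (Suc k) g (1 \<cdot>\<^sub>v ?u' + (- s') \<cdot>\<^sub>v y0)"
    unfolding basis_lin_comb2[OF insert_zero_carrier y0] x0_eq[symmetric] ec ec' cancel ..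
  hence coeffs: "1 \<cdot>\<^sub>v ?u + (- s) \<cdot>\<^sub>v y0 = 1 \<cdot>\<^sub>v ?u' + (- s') \<cdot>\<^sub>v y0"
    using basis_inj y0 by (auto dest: inj_onD)
  have coord: "?u $ i - s * y0 $ i = ?u' $ i - s' * y0 $ i" if "i < Suc k" for i
    using arg_cong[OF coeffs, of "\<lambda>v. v $ i"] that y0 by simp
  have "s * y0 $ i0 = s' * y0 $ i0" using coord[OF i0] unfolding insert_zero_at[OF i0] by simp
  hence "s = s'" using y0_i0 by simp
  hence "?u = ?u'" using coord by (intro eq_vecI) (auto simp: insert_zero_def)
  thus "z = z'" by (rule insert_zero_inj[OF z z'])
qed

lemma code_basis_reduce: "code_basis m k (\<lambda>j. Psi *\<^sub>v g (skip_index i0 j)) (reduce C)"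
  unfolding code_basis_def using reduce_eq_image inj_on_reduced_basis
  by (auto simp: skip_index_def basis_carrier)

end

lemma is_code_reduce:
  assumes "C \<in> codes_with_hull n (Suc k) x0"
  shows "is_code m k (reduce C)"
proof -
  have code: "is_code n (Suc k) C" and h: "code_hull n C = line x0"
    using assms unfolding codes_with_hull_def by auto
  obtain g where g: "code_basis n (Suc k) g C" using code unfolding is_code_iff_code_basis by blast
  have x0h: "x0 \<in> code_hull n C" unfolding h by (rule mem_line_self[OF x0_carrier])
  hence "x0 \<in> C" using code_hull_subset by blast
  then obtain y0 where y0: "y0 \<in> carrier_vec (Suc k)" "x0 = lin_comb n (Suc k) g y0"
    using g unfolding code_basis_def by auto
  have "y0 \<noteq> 0\<^sub>v (Suc k)" using y0 lin_comb_zero x0_p p_lt by force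
  then obtain i0 where "i0 < Suc k" "y0 $ i0 \<noteq> 0" using y0(1) by (auto simp: vec_eq_iff)
  thus ?thesis using code_basis_reduce[OF g x0h y0] unfolding is_code_iff_code_basis by blast
qed

lemma card_codes_with_hull_eq_card_lcd:
  "card (codes_with_hull n (Suc k) x0) = card {D. is_code m k D \<and> lcd_wrt m B D}"
proof -
  let ?L = "{D. is_code m k D \<and> lcd_wrt m B D}"
  have "bij_betw reduce (codes_with_hull n (Suc k) x0) ?L"
  proof (rule bij_betw_byWitness[where f' = lift])
    show "\<forall>C\<in>codes_with_hull n (Suc k) x0. lift (reduce C) = C"
    proof
      fix C assume "C \<in> codes_with_hull n (Suc k) x0"
      hence "is_code n (Suc k) C" "code_hull n C = line x0" unfolding codes_with_hull_def by auto
      thus "lift (reduce C) = C" using lift_reduce[OF is_code_subspace] mem_line_self[OF x0_carrier] by simp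
    qed
    show "\<forall>D\<in>?L. reduce (lift D) = D" using reduce_lift is_code_carrier by blast
    show "reduce ` codes_with_hull n (Suc k) x0 \<subseteq> ?L"
      using is_code_reduce lcd_wrt_reduce is_code_subspace unfolding codes_with_hull_def by blast
    show "lift ` ?L \<subseteq> codes_with_hull n (Suc k) x0" using lift_mem_codes_with_hull by blast
  qed
  thus ?thesis by (rule bij_betw_same_card)
qed

end


section \<open>Explicit models of x0^\<bottom>/\<langle>x0\<rangle>\<close>

lemma mult_mat_vec_two_entries:
  fixes A :: "'a::field mat"
  assumes A: "A \<in> carrier_mat r c"
    and entries: "\<And>i j. i < r \<Longrightarrow> j < c \<Longrightarrow>
      A $$ (i,j) = (if j = f i then \<alpha> i else 0) + (if j = g i then \<beta> i else 0)"
    and f: "\<And>i. i < r \<Longrightarrow> f i < c \<or> \<alpha> i = 0" and g: "\<And>i. i < r \<Longrightarrow> g i < c \<or> \<beta> i = 0"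
    and d: "d \<in> carrier_vec c"
  shows "A *\<^sub>v d = vec r (\<lambda>i. \<alpha> i * d $ f i + \<beta> i * d $ g i)"
proof (rule eq_vecI)
  fix i assume "i < dim_vec (vec r (\<lambda>i. \<alpha> i * d $ f i + \<beta> i * d $ g i))"
  hence i: "i < r" by simp
  have "(A *\<^sub>v d) $ i
      = (\<Sum>j\<in>{0..<c}. ((if j = f i then \<alpha> i else 0) + (if j = g i then \<beta> i else 0)) * d $ j)"
    using A d i entries by (auto simp: scalar_prod_def intro!: sum.cong)
  also have "\<dots> = (\<Sum>j\<in>{0..<c}. (if j = f i then \<alpha> i * d $ j else 0))
                + (\<Sum>j\<in>{0..<c}. (if j = g i then \<beta> i * d $ j else 0))"
    by (subst sum.distrib[symmetric]) (rule sum.cong, auto simp: distrib_right)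
  also have "\<dots> = \<alpha> i * d $ f i + \<beta> i * d $ g i" using f[OF i] g[OF i] by auto
  finally show "(A *\<^sub>v d) $ i = vec r (\<lambda>i. \<alpha> i * d $ f i + \<beta> i * d $ g i) $ i" using i by simp
qed (use A in simp)

lemma sum_split2:
  fixes f :: "nat \<Rightarrow> 'b::comm_monoid_add"
  assumes "2 \<le> (n::nat)"
  shows "(\<Sum>i\<in>{0..<n}. f i) = f 0 + f 1 + (\<Sum>j\<in>{0..<n-2}. f (j + 2))"
proof -
  define k where "k = n - 2"
  have n: "n = Suc (Suc k)" using assms unfolding k_def by simp
  have "(\<Sum>i\<in>{0..<n}. f i) = f 0 + (f (Suc 0) + (\<Sum>j\<in>{0..<k}. f (Suc (Suc j))))"
    unfolding n by (simp only: sum.atLeast0_lessThan_Suc_shift comp_def)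
  thus ?thesis unfolding k_def by (simp add: numeral_2_eq_2 add.assoc)
qed

lemma sum_split3:
  fixes f :: "nat \<Rightarrow> 'b::comm_monoid_add"
  assumes "3 \<le> (n::nat)"
  shows "(\<Sum>i\<in>{0..<n}. f i) = f 0 + f 1 + f 2 + (\<Sum>j\<in>{0..<n-3}. f (j + 3))"
proof -
  define k where "k = n - 3"
  have n: "n = Suc (Suc (Suc k))" using assms unfolding k_def by simp
  have "(\<Sum>i\<in>{0..<n}. f i)
      = f 0 + (f (Suc 0) + (f (Suc (Suc 0)) + (\<Sum>j\<in>{0..<k}. f (Suc (Suc (Suc j))))))"
    unfolding n by (simp only: sum.atLeast0_lessThan_Suc_shift comp_def)
  thus ?thesis unfolding k_def by (simp add: numeral_2_eq_2 numeral_3_eq_3 add.assoc)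
qed

lemma mat_shift2_mult_vec:
  assumes "d \<in> carrier_vec (n - 2)"
  shows "mat n (n - 2) (\<lambda>(i, j). if 2 \<le> i \<and> j = i - 2 then 1 else 0) *\<^sub>v d
       = vec n (\<lambda>i. if 2 \<le> i then d $ (i - 2) else (0 :: 'a::field))"
proof -
  have "mat n (n - 2) (\<lambda>(i, j). if 2 \<le> i \<and> j = i - 2 then 1 else 0) *\<^sub>v d
      = vec n (\<lambda>i. (if 2 \<le> i then 1 else 0) * d $ (i - 2) + 0 * d $ 0)"
    by (rule mult_mat_vec_two_entries[OF _ _ _ _ assms]) auto
  thus ?thesis by (auto intro!: eq_vecI)
qed

lemma mat_drop2_mult_vec:
  assumes "z \<in> carrier_vec n" and "2 \<le> n"
  shows "mat (n - 2) n (\<lambda>(j, i). if i = j + 2 then 1 else 0) *\<^sub>v z = vec (n - 2) (\<lambda>j. z $ (j + 2) :: 'a::field)"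
proof -
  have "mat (n - 2) n (\<lambda>(j, i). if i = j + 2 then 1 else 0) *\<^sub>v z = vec (n - 2) (\<lambda>j. 1 * z $ (j + 2) + 0 * z $ 0)"
    by (rule mult_mat_vec_two_entries[OF _ _ _ _ assms(1)]) (use assms(2) in auto)
  thus ?thesis by (auto intro!: eq_vecI)
qed

text \<open>If s^2 = -1, take x0 = e_0 + s e_1; then x0^\<bottom> = \<langle>x0\<rangle> \<oplus> \<langle>e_2, ..., e_(n-1)\<rangle>
  and the induced form is the identity.\<close>
lemma isotropic_reduction_identity:
  fixes s :: "'a::field"
  assumes s: "s * s = -1" and n2: "2 \<le> n"
  shows "isotropic_reduction n (n - 2) (vec n (\<lambda>i. if i = 0 then 1 else if i = 1 then s else 0))
    (mat n (n - 2) (\<lambda>(i, j). if 2 \<le> i \<and> j = i - 2 then 1 else 0))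
    (mat (n - 2) n (\<lambda>(j, i). if i = j + 2 then 1 else 0)) (1\<^sub>m (n - 2)) 0"
    (is "isotropic_reduction n ?m ?x0 ?Phi ?Psi _ 0")
proof -
  have x0c: "?x0 \<in> carrier_vec n" by simp
  have Phi: "?Phi \<in> carrier_mat n ?m" and Psi: "?Psi \<in> carrier_mat ?m n" by simp_all
  show ?thesis
  proof (unfold_locales)
    show "?x0 $ 0 \<noteq> 0" "0 < n" using n2 by simp_all
    show "?x0 \<bullet> ?x0 = 0" unfolding scalar_prod_def using n2 s by (simp add: sum_split2[OF n2])
    show "?Psi *\<^sub>v (?Phi *\<^sub>v d) = d" if d: "d \<in> carrier_vec ?m" for d
      unfolding mat_drop2_mult_vec[OF mult_mat_vec_carrier[OF Phi d] n2] unfolding mat_shift2_mult_vec[OF d]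
      using d by (intro eq_vecI) auto
    show "?Psi *\<^sub>v ?x0 = 0\<^sub>v ?m" unfolding mat_drop2_mult_vec[OF x0c n2] by (intro eq_vecI) auto
    show "(?Phi *\<^sub>v d) $ 0 = 0" if "d \<in> carrier_vec ?m" for d
      unfolding mat_shift2_mult_vec[OF that] using n2 by simp
    show "?x0 \<bullet> (?Phi *\<^sub>v d) = 0" if "d \<in> carrier_vec ?m" for d
      unfolding mat_shift2_mult_vec[OF that] scalar_prod_def by (intro sum.neutral) auto
    show "(?Phi *\<^sub>v d) \<bullet> (?Phi *\<^sub>v d') = d \<bullet> (1\<^sub>m ?m *\<^sub>v d')"
      if d: "d \<in> carrier_vec ?m" and d': "d' \<in> carrier_vec ?m" for d d'
      unfolding mat_shift2_mult_vec[OF d] mat_shift2_mult_vec[OF d'] scalar_prod_def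
      using d d' by (simp add: sum_split2[OF n2])
    show "z = (z $ 0 / ?x0 $ 0) \<cdot>\<^sub>v ?x0 + ?Phi *\<^sub>v (?Psi *\<^sub>v z)"
      if z: "z \<in> carrier_vec n" and zx: "z \<bullet> ?x0 = 0" for z
    proof (rule eq_vecI)
      have "z $ 0 + z $ 1 * s = 0" using zx z n2 unfolding scalar_prod_def by (simp add: sum_split2[OF n2])
      hence z0: "z $ 0 = - (z $ 1 * s)" by (simp add: eq_neg_iff_add_eq_0)
      have "z $ 0 * s = - ((s * s) * z $ 1)" unfolding z0 by (simp add: algebra_simps)
      hence z1: "z $ 1 = z $ 0 * s" using s by simp
      fix i assume "i < dim_vec ((z $ 0 / ?x0 $ 0) \<cdot>\<^sub>v ?x0 + ?Phi *\<^sub>v (?Psi *\<^sub>v z))"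
      hence i: "i < n" by simp
      have "Suc (Suc (i - 2)) = i" if "2 \<le> i" using that by arith
      hence PhiPsi: "(?Phi *\<^sub>v (?Psi *\<^sub>v z)) $ i = (if 2 \<le> i then z $ i else 0)"
        unfolding mat_shift2_mult_vec[OF mult_mat_vec_carrier[OF Psi z]] unfolding mat_drop2_mult_vec[OF z n2] using i by auto
      consider "i = 0" | "i = 1" | "2 \<le> i" by arith
      thus "z $ i = ((z $ 0 / ?x0 $ 0) \<cdot>\<^sub>v ?x0 + ?Phi *\<^sub>v (?Psi *\<^sub>v z)) $ i"
        using i z1 PhiPsi by cases simp_all
    qed (use z in simp)
  qed (use n2 in simp_all)
qed


text \<open>If -1 is not a square, write -1 = a^2 + b^2 and -\<gamma> = c^2 and take x0 = (a, b, 1, 0, ..., 0).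
  A complement of x0 in x0^\<bottom> is spanned by e_3, ..., e_(n-1) and u = (cb, -ca, 0, ..., 0), which
  is orthogonal to them and has (u, u) = \<gamma>.\<close>
locale nonsquare_model =
  fixes n :: nat and a b c \<gamma> :: "'a::field"
  assumes ab: "a * a + b * b = -1" and c: "c * c = - \<gamma>" and c0: "c \<noteq> 0" and n3: "3 \<le> n"
begin

definition x0 :: "'a vec" where
  "x0 = vec n (\<lambda>i. if i = 0 then a else if i = 1 then b else if i = 2 then 1 else 0)"

definition Phi :: "'a mat" where
  "Phi = mat n (n - 2) (\<lambda>(i, j). if j = (if i < 2 then n - 3 else i - 3)
     then (if i = 0 then c * b else if i = 1 then - (c * a) else if i = 2 then 0 else 1) else 0)"

definition Psi :: "'a mat" where
  "Psi = mat (n - 2) n (\<lambda>(j, i). (if i = (if j = n - 3 then 0 else j + 3) then (if j = n - 3 then - (b / c) else 1) else 0)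
     + (if i = 1 then (if j = n - 3 then a / c else 0) else 0))"

definition form :: "'a mat" where
  "form = mat (n - 2) (n - 2) (\<lambda>(i, j). if i = j then (if i = n - 2 - 1 then \<gamma> else 1) else 0)"

lemma x0_carrier: "x0 \<in> carrier_vec n"
  unfolding x0_def by simp

lemma Phi_carrier: "Phi \<in> carrier_mat n (n - 2)"
  unfolding Phi_def by simp

lemma Psi_carrier: "Psi \<in> carrier_mat (n - 2) n"
  unfolding Psi_def by simp

lemma Phi_mult_vec_index:
  assumes d: "d \<in> carrier_vec (n - 2)" and i: "i < n"
  shows "(Phi *\<^sub>v d) $ i = (if i = 0 then c * b * d $ (n - 3) else if i = 1 then - (c * a) * d $ (n - 3)
    else if i = 2 then 0 else d $ (i - 3))"
proof -
  have "Phi *\<^sub>v d = vec n (\<lambda>i. (if i = 0 then c * b else if i = 1 then - (c * a) else if i = 2 then 0 else 1)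
    * d $ (if i < 2 then n - 3 else i - 3) + 0 * d $ 0)"
    by (rule mult_mat_vec_two_entries[OF Phi_carrier _ _ _ d]) (use n3 in \<open>auto simp: Phi_def\<close>)
  thus ?thesis using i by simp
qed

lemma Psi_mult_vec_index:
  assumes z: "z \<in> carrier_vec n" and j: "j < n - 2"
  shows "(Psi *\<^sub>v z) $ j = (if j = n - 3 then (a * z $ 1 - b * z $ 0) / c else z $ (j + 3))"
proof -
  have "Psi *\<^sub>v z = vec (n - 2) (\<lambda>j. (if j = n - 3 then - (b / c) else 1) * z $ (if j = n - 3 then 0 else j + 3)
    + (if j = n - 3 then a / c else 0) * z $ 1)"
    by (rule mult_mat_vec_two_entries[OF Psi_carrier _ _ _ z]) (use n3 in \<open>auto simp: Psi_def\<close>)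
  thus ?thesis using j c0 by (simp add: field_simps)
qed

lemma form_mult_vec:
  assumes "d \<in> carrier_vec (n - 2)"
  shows "form *\<^sub>v d = vec (n - 2) (\<lambda>j. (if j = n - 3 then \<gamma> else 1) * d $ j)"
proof -
  have "form *\<^sub>v d = vec (n - 2) (\<lambda>j. (if j = n - 3 then \<gamma> else 1) * d $ j + 0 * d $ 0)"
    by (rule mult_mat_vec_two_entries[OF _ _ _ _ assms]) (use n3 in \<open>auto simp: form_def\<close>)
  thus ?thesis by (auto intro!: eq_vecI)
qed

lemma scalar_prod_split3:
  "u \<in> carrier_vec n \<Longrightarrow> v \<bullet> u = v $ 0 * u $ 0 + v $ 1 * u $ 1 + v $ 2 * u $ 2
     + (\<Sum>j\<in>{0..<n - 3}. v $ (j + 3) * u $ (j + 3))"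
  unfolding scalar_prod_def by (simp add: sum_split3[OF n3])

lemma Psi_Phi:
  assumes d: "d \<in> carrier_vec (n - 2)"
  shows "Psi *\<^sub>v (Phi *\<^sub>v d) = d"
proof (rule eq_vecI)
  fix j assume "j < dim_vec d"
  hence j: "j < n - 2" using d by simp
  have Phid: "Phi *\<^sub>v d \<in> carrier_vec n" using Phi_carrier d by simp
  show "(Psi *\<^sub>v (Phi *\<^sub>v d)) $ j = d $ j"
  proof (cases "j = n - 3")
    case True
    have "(a * (- (c * a) * d $ (n - 3)) - b * (c * b * d $ (n - 3))) / c = - (a * a + b * b) * d $ (n - 3)"
      using c0 by (simp add: field_simps)
    thus ?thesis using True j n3 ab by (simp add: Psi_mult_vec_index[OF Phid] Phi_mult_vec_index[OF d])
  next
    case False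
    hence "j + 3 < n" using j by simp
    thus ?thesis using False j by (simp add: Psi_mult_vec_index[OF Phid] Phi_mult_vec_index[OF d])
  qed
qed (use Psi_carrier d in simp)

lemma Phi_mult_vec_simps:
  assumes d: "d \<in> carrier_vec (n - 2)"
  shows "(Phi *\<^sub>v d) $ 0 = c * b * d $ (n - 3)" "(Phi *\<^sub>v d) $ 1 = - (c * a) * d $ (n - 3)"
    "(Phi *\<^sub>v d) $ 2 = 0" "j < n - 3 \<Longrightarrow> (Phi *\<^sub>v d) $ (j + 3) = d $ j"
  using Phi_mult_vec_index[OF d] n3 by auto

lemma x0_isotropic: "x0 \<bullet> x0 = 0"
  unfolding scalar_prod_split3[OF x0_carrier] using ab n3 by (simp add: x0_def)

lemma x0_orth_Phi:
  assumes d: "d \<in> carrier_vec (n - 2)"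
  shows "x0 \<bullet> (Phi *\<^sub>v d) = 0"
proof -
  have "(\<Sum>j\<in>{0..<n - 3}. x0 $ (j + 3) * (Phi *\<^sub>v d) $ (j + 3)) = 0"
    using n3 by (intro sum.neutral) (simp add: x0_def)
  thus ?thesis unfolding scalar_prod_split3[OF mult_mat_vec_carrier[OF Phi_carrier d]] Phi_mult_vec_simps[OF d]
    using n3 by (simp add: x0_def algebra_simps)
qed

lemma Phi_isometry:
  assumes d: "d \<in> carrier_vec (n - 2)" and d': "d' \<in> carrier_vec (n - 2)"
  shows "(Phi *\<^sub>v d) \<bullet> (Phi *\<^sub>v d') = d \<bullet> (form *\<^sub>v d')"
proof -
  have "(\<Sum>j\<in>{0..<n - 3}. (Phi *\<^sub>v d) $ (j + 3) * (Phi *\<^sub>v d') $ (j + 3)) = (\<Sum>j\<in>{0..<n - 3}. d $ j * d' $ j)"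
    using d d' by (intro sum.cong) (auto simp: Phi_mult_vec_simps)
  hence "(Phi *\<^sub>v d) \<bullet> (Phi *\<^sub>v d') = c * c * (a * a + b * b) * (d $ (n - 3) * d' $ (n - 3))
      + (\<Sum>j\<in>{0..<n - 3}. d $ j * d' $ j)"
    unfolding scalar_prod_split3[OF mult_mat_vec_carrier[OF Phi_carrier d']]
      Phi_mult_vec_simps(1-3)[OF d] Phi_mult_vec_simps(1-3)[OF d'] by (simp add: algebra_simps)
  also have "\<dots> = (\<Sum>j\<in>{0..<n - 2}. d $ j * ((if j = n - 3 then \<gamma> else 1) * d' $ j))"
  proof -
    have m: "n - 2 = Suc (n - 3)" using n3 by simp
    have "(\<Sum>j\<in>{0..<n - 3}. d $ j * ((if j = n - 3 then \<gamma> else 1) * d' $ j)) = (\<Sum>j\<in>{0..<n - 3}. d $ j * d' $ j)"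
      by (intro sum.cong) auto
    thus ?thesis unfolding m using ab c by (simp add: algebra_simps)
  qed
  also have "\<dots> = d \<bullet> (form *\<^sub>v d')"
    unfolding form_mult_vec[OF d'] scalar_prod_def using d by simp
  finally show ?thesis .
qed

lemma Psi_x0: "Psi *\<^sub>v x0 = 0\<^sub>v (n - 2)"
proof (rule eq_vecI)
  fix i assume "i < dim_vec (0\<^sub>v (n - 2) :: 'a vec)"
  hence i: "i < n - 2" by simp
  have "(Psi *\<^sub>v x0) $ i = (if i = n - 3 then (a * x0 $ 1 - b * x0 $ 0) / c else x0 $ (i + 3))"
    by (rule Psi_mult_vec_index[OF x0_carrier i])
  thus "(Psi *\<^sub>v x0) $ i = 0\<^sub>v (n - 2) $ i" using i n3 by (simp add: x0_def)
qed (use Psi_carrier in simp)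

lemma orth_x0_decomp:
  assumes z: "z \<in> carrier_vec n" and zx: "z \<bullet> x0 = 0"
  shows "z = (z $ 2 / x0 $ 2) \<cdot>\<^sub>v x0 + Phi *\<^sub>v (Psi *\<^sub>v z)"
proof (rule eq_vecI)
  have "z \<bullet> x0 = a * z $ 0 + b * z $ 1 + z $ 2"
    unfolding scalar_prod_split3[OF x0_carrier] using n3 by (simp add: x0_def algebra_simps)
  hence z2: "z $ 2 = - (a * z $ 0) - b * z $ 1" using zx by (simp add: algebra_simps eq_neg_iff_add_eq_0)
  have x02: "x0 $ 2 = 1" unfolding x0_def using n3 by simp
  have Psiz: "Psi *\<^sub>v z \<in> carrier_vec (n - 2)" using Psi_carrier z by simp
  fix i assume "i < dim_vec ((z $ 2 / x0 $ 2) \<cdot>\<^sub>v x0 + Phi *\<^sub>v (Psi *\<^sub>v z))"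
  hence i: "i < n" using Phi_carrier by simp
  consider "i = 0" | "i = 1" | "i = 2" | "3 \<le> i" by arith
  thus "z $ i = ((z $ 2 / x0 $ 2) \<cdot>\<^sub>v x0 + Phi *\<^sub>v (Psi *\<^sub>v z)) $ i"
  proof cases
    case 1
    have "z $ 2 * a + c * b * ((a * z $ 1 - b * z $ 0) / c) = - (a * a + b * b) * z $ 0"
      unfolding z2 using c0 by (simp add: field_simps)
    thus ?thesis using 1 i n3 ab x02 Phi_carrier
      by (simp add: Phi_mult_vec_simps[OF Psiz] Psi_mult_vec_index[OF z] x0_def del: index_mult_mat_vec)
  next
    case 2
    have "(Phi *\<^sub>v (Psi *\<^sub>v z)) $ 1 = - (c * a) * (Psi *\<^sub>v z) $ (n - 3)"
      by (rule Phi_mult_vec_simps(2)[OF Psiz])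
    also have "(Psi *\<^sub>v z) $ (n - 3) = (a * z $ 1 - b * z $ 0) / c"
      using n3 by (simp add: Psi_mult_vec_index[OF z] del: index_mult_mat_vec)
    moreover have "z $ 2 * b - c * a * ((a * z $ 1 - b * z $ 0) / c) = - (a * a + b * b) * z $ 1"
      unfolding z2 using c0 by (simp add: field_simps)
    ultimately show ?thesis unfolding 2 using i n3 ab x02 Phi_carrier by (simp add: x0_def)
  next
    case 3 thus ?thesis
      using i x02 Phi_carrier by (simp add: Phi_mult_vec_simps[OF Psiz] x0_def del: index_mult_mat_vec)
  next
    case 4
    hence "i - 3 < n - 3" "i - 3 + 3 = i" using i by arith+
    thus ?thesis using 4 i Phi_carrier Phi_mult_vec_simps(4)[OF Psiz, of "i - 3"]
      by (simp add: Psi_mult_vec_index[OF z] x0_def del: index_mult_mat_vec)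
  qed
qed (use z Phi_carrier in simp)

lemma isotropic_reduction: "isotropic_reduction n (n - 2) x0 Phi Psi form 2"
  by unfold_locales
    (use n3 x0_carrier Phi_carrier Psi_carrier Psi_Phi Psi_x0 x0_orth_Phi Phi_isometry orth_x0_decomp
      x0_isotropic Phi_mult_vec_simps(3) in \<open>auto simp: x0_def\<close>)

end


lemma form_of_type_carrier: "form_of_type eps m \<in> carrier_mat m m"
  unfolding form_of_type_def by (auto simp: Let_def)

lemma minus_one_square_if_isotropic_dim2:
  fixes x :: "'a::field vec"
  assumes x: "x \<in> carrier_vec 2" and x0: "x \<noteq> 0\<^sub>v 2" and xx: "x \<bullet> x = 0"
  shows "is_square (-1 :: 'a)"
proof -
  have e: "x $ 0 * x $ 0 + x $ 1 * x $ 1 = 0"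
    using xx x unfolding scalar_prod_def by (simp add: numeral_2_eq_2)
  have "x $ 0 \<noteq> 0"
  proof
    assume "x $ 0 = 0"
    hence "x $ 1 = 0" using e by simp
    hence "x = 0\<^sub>v 2" using \<open>x $ 0 = 0\<close> x by (intro eq_vecI) (auto simp: less_2_cases_iff)
    thus False using x0 by simp
  qed
  hence "(x $ 1 / x $ 0) * (x $ 1 / x $ 0) = -1" using e by (simp add: field_simps eq_neg_iff_add_eq_0)
  thus ?thesis unfolding is_square_def by blast
qed

lemma exists_isotropic_reduction:
  fixes x :: "'a::{finite,field} vec"
  assumes odd: "odd (card (UNIV :: 'a set))" and n2: "2 \<le> n"
    and x: "x \<in> carrier_vec n" and x0: "x \<noteq> 0\<^sub>v n" and xx: "x \<bullet> x = 0"
  shows "\<exists>x0 Phi Psi p.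
    isotropic_reduction n (n - 2) x0 Phi Psi (form_of_type (quad_char (-1 :: 'a)) (n - 2) :: 'a mat) p"
proof (cases "is_square (-1 :: 'a)")
  case True
  then obtain s :: 'a where s: "s * s = -1" unfolding is_square_def by blast
  have F: "form_of_type (quad_char (-1 :: 'a)) (n - 2) = (1\<^sub>m (n - 2) :: 'a mat)"
    using True unfolding is_square_def quad_char_def form_of_type_def by simp
  show ?thesis unfolding F by (rule exI)+ (rule isotropic_reduction_identity[OF s n2])
next
  case False
  have n3: "3 \<le> n"
    using n2 minus_one_square_if_isotropic_dim2[of x] x x0 xx False by (cases "n = 2") auto
  define \<gamma> where "\<gamma> = (SOME g::'a. g \<noteq> 0 \<and> \<not> (\<exists>y. y * y = g))"
  have \<gamma>: "\<gamma> \<noteq> 0" "\<not> is_square \<gamma>"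
    using someI_ex[OF exists_nonsquare[OF odd, unfolded is_square_def]] unfolding \<gamma>_def is_square_def
    by auto
  have "is_square ((-1) * \<gamma>)" by (rule nonsquare_mult_nonsquare[OF False \<gamma>(2)])
  then obtain c where "c * c = (-1) * \<gamma>" unfolding is_square_def by blast
  hence c: "c * c = - \<gamma>" and c0: "c \<noteq> 0" using \<gamma>(1) by auto
  obtain a b :: 'a where ab: "a * a + b * b = -1" using sum_of_two_squares by blast
  interpret nonsquare_model n a b c \<gamma> by unfold_locales (use ab c c0 n3 in auto)
  have "quad_char (-1 :: 'a) = -1" using False unfolding quad_char_def is_square_def by auto
  hence F: "form_of_type (quad_char (-1 :: 'a)) (n - 2) = form"
    unfolding form_of_type_def form_def Let_def \<gamma>_def[symmetric] by simp
  show ?thesis unfolding F by (rule exI)+ (rule isotropic_reduction)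
qed

lemma card_codes_with_hull_K_vecs:
  fixes x :: "'a::{finite,field} vec"
  assumes odd: "odd (card (UNIV :: 'a set))" and x: "x \<in> K_vecs n" and n2: "2 \<le> n"
  shows "card (codes_with_hull n (Suc k) x) = card {D :: 'a vec set. is_code (n - 2) k D \<and>
           M_LCD (n - 2) (form_of_type (quad_char (-1 :: 'a)) (n - 2)) D}"
proof -
  let ?F = "form_of_type (quad_char (-1 :: 'a)) (n - 2) :: 'a mat"
  have xc: "x \<in> carrier_vec n" and xx: "x \<bullet> x = 0" and x0: "x \<noteq> 0\<^sub>v n"
    using x K_vecs_neq_zero[OF x] unfolding K_vecs_def by auto
  obtain x0 Phi Psi p where red: "isotropic_reduction n (n - 2) x0 Phi Psi ?F p"
    using exists_isotropic_reduction[OF odd n2 xc x0 xx] by blast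
  interpret isotropic_reduction n "n - 2" x0 Phi Psi ?F p by (rule red)
  have x00: "x0 \<noteq> 0\<^sub>v n" using x0_p p_lt by auto
  have "card (codes_with_hull n (Suc k) x) = card (codes_with_hull n (Suc k) x0)"
    using two_neq_zero_if_odd_card[OF odd] xc x0_carrier xx x0_isotropic x0 x00
    by (rule card_codes_with_hull_eq)
  also have "\<dots> = card {D. is_code (n - 2) k D \<and> lcd_wrt (n - 2) ?F D}"
    by (rule card_codes_with_hull_eq_card_lcd)
  also have "{D. is_code (n - 2) k D \<and> lcd_wrt (n - 2) ?F D} = {D. is_code (n - 2) k D \<and> M_LCD (n - 2) ?F D}"
    using M_LCD_iff_lcd_wrt[OF _ form_of_type_carrier] by (intro Collect_cong conj_cong refl) auto
  finally show ?thesis .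
qed


section \<open>Counting GI-reducible codes\<close>

lemma card_GI_reducible_codes:
  assumes odd: "odd (card (UNIV :: 'a::{finite,field} set))"
  shows "card {C :: 'a vec set. is_code n k C \<and> GI_reducible n C}
       = card {C :: 'a vec set. is_code n k C \<and> LCD n C}
       + card {C :: 'a vec set. is_code n k C \<and> (\<exists>x\<in>K_vecs n. code_hull n C = line x)}"
proof -
  let ?LCD = "{C :: 'a vec set. is_code n k C \<and> LCD n C}"
  let ?R = "{C :: 'a vec set. is_code n k C \<and> (\<exists>x\<in>K_vecs n. code_hull n C = line x)}"
  have "{C :: 'a vec set. is_code n k C \<and> GI_reducible n C} = ?LCD \<union> ?R"
    using GI_reducible_iff[OF _ odd] by auto
  moreover have "?LCD \<inter> ?R = {}"
  proof -
    have "code_hull n C \<noteq> line x" if "LCD n C" "x \<in> K_vecs n" for C and x :: "'a vec"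
      using that mem_line_self[of x n] K_vecs_neq_zero[of x n] unfolding LCD_def K_vecs_def by auto
    thus ?thesis by blast
  qed
  ultimately show ?thesis using card_Un_disjoint[OF finite_codes finite_codes] by simp
qed

theorem mainTheorem3:
  fixes n k :: nat
  assumes "odd (card (UNIV :: 'a::{finite,field} set))"
    and "1 \<le> k" and "k < n"
  shows "real (card {C :: 'a vec set. is_code n k C \<and> GI_reducible n C}) =
           real (card {C :: 'a vec set. is_code n k C \<and> LCD n C})
         + real (card {x :: 'a vec. x \<in> carrier_vec n \<and> x \<bullet> x = 0 \<and> x \<bullet> all_ones_vec n \<noteq> 0})
             / (real (card (UNIV :: 'a set)) - 1)
           * real (card {C :: 'a vec set. is_code (n - 2) (k - 1) C \<and>
                M_LCD (n - 2) (form_of_type (quad_char (-1 :: 'a)) (n - 2)) C})"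
proof -
  let ?q = "card (UNIV :: 'a set)"
  let ?R = "{C :: 'a vec set. is_code n k C \<and> (\<exists>x\<in>K_vecs n. code_hull n C = line x)}"
  let ?L = "card {C :: 'a vec set. is_code (n - 2) (k - 1) C \<and>
                M_LCD (n - 2) (form_of_type (quad_char (-1 :: 'a)) (n - 2)) C}"
  have k: "k = Suc (k - 1)" and n2: "2 \<le> n" using assms(2,3) by auto
  have "card (codes_with_hull n k x) = ?L" if "x \<in> K_vecs n" for x :: "'a vec"
    using card_codes_with_hull_K_vecs[OF assms(1) that n2, of "k - 1"] k by simp
  hence "(?q - 1) * card ?R = card (K_vecs n :: 'a vec set) * ?L" by (rule card_codes_with_line_hull)
  hence "real (?q - 1) * real (card ?R) = real (card (K_vecs n :: 'a vec set)) * real ?L"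
    by (simp flip: of_nat_mult)
  moreover have "real (?q - 1) = real ?q - 1" using card_UNIV_ge_2[where 'a = 'a] by simp
  ultimately have "real (card ?R) = real (card (K_vecs n :: 'a vec set)) / (real ?q - 1) * real ?L"
    using card_UNIV_ge_2[where 'a = 'a] by (simp add: field_simps)
  thus ?thesis unfolding card_GI_reducible_codes[OF assms(1)] K_vecs_def by simp
qed

end
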